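(* Let $X_1,X_2$ be complex Banach spaces, $\mathcal{A}_1\subseteq\mathcal{B}(X_1)$, $\mathcal{A}_2\subseteq\mathcal{B}(X_2)$ standard operator algebras, $r,s$ nonnegative integers with $r+s\geq1$, and $\Phi:\mathcal{A}_1\to\mathcal{A}_2$ a map whose range contains every operator in $\mathcal{B}(X_2)$ of rank at most two, satisfying $\sigma_\pi(B^rAB^s)=\sigma_\pi(\Phi(B)^r\Phi(A)\Phi(B)^s)$ for all $A,B\in\mathcal{A}_1$. Then: $\Phi(A)=0$ if and only if $A=0$; $\Phi$ is linear and injective; and for every $A\in\mathcal{A}_1$, $A$ has rank one if and only if $\Phi(A)$ has rank one.
   Context: A standard operator algebra on a complex Banach space $X$ is a subalgebra of $\mathcal{B}(X)$ containing all finite rank operators; it need not be closed or unital. The peripheral spectrum of $T$ is $\sigma_\pi(T)=\{z\in\sigma(T):|z|=r(T)\}$, where $r(T)$ is the spectral radius. *)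

theory Defs
  imports "HOL-Analysis.Analysis"
begin

class complex_banach = banach +
  fixes scaleC :: "complex \<Rightarrow> 'a \<Rightarrow> 'a"
  assumes scaleC_add_right: "scaleC a (x + y) = scaleC a x + scaleC a y"
    and scaleC_add_left: "scaleC (a + b) x = scaleC a x + scaleC b x"
    and scaleC_scaleC: "scaleC a (scaleC b x) = scaleC (a * b) x"
    and scaleC_one: "scaleC 1 x = x"
    and scaleR_scaleC: "scaleR r x = scaleC (complex_of_real r) x"
    and norm_scaleC: "norm (scaleC a x) = cmod a * norm x"

definition bops :: "('a::complex_banach \<Rightarrow> 'a) set" where
  "bops = {T. bounded_linear T \<and> (\<forall>c x. T (scaleC c x) = scaleC c (T x))}"

definition cspan :: "'a::complex_banach set \<Rightarrow> 'a set" where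
  "cspan V = {y. \<exists>c. y = (\<Sum>v\<in>V. scaleC (c v) v)}"

definition finite_rank :: "('a::complex_banach \<Rightarrow> 'a) \<Rightarrow> bool" where
  "finite_rank T \<longleftrightarrow> (\<exists>V. finite V \<and> range T \<subseteq> cspan V)"

text \<open>Rank = complex dimension of the range (meaningful for finite rank operators).\<close>
definition crank :: "('a::complex_banach \<Rightarrow> 'a) \<Rightarrow> nat" where
  "crank T = (LEAST n. \<exists>V. finite V \<and> card V = n \<and> range T \<subseteq> cspan V)"

definition rank_one :: "('a::complex_banach \<Rightarrow> 'a) \<Rightarrow> bool" where
  "rank_one T \<longleftrightarrow> finite_rank T \<and> crank T = 1"

definition rank_le :: "nat \<Rightarrow> ('a::complex_banach \<Rightarrow> 'a) \<Rightarrow> bool" where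
  "rank_le n T \<longleftrightarrow> finite_rank T \<and> crank T \<le> n"

definition standard_operator_algebra :: "('a::complex_banach \<Rightarrow> 'a) set \<Rightarrow> bool" where
  "standard_operator_algebra \<A> \<longleftrightarrow>
     \<A> \<subseteq> bops \<and>
     (\<forall>S\<in>\<A>. \<forall>T\<in>\<A>. (\<lambda>x. S x + T x) \<in> \<A>) \<and>
     (\<forall>S\<in>\<A>. \<forall>c. (\<lambda>x. scaleC c (S x)) \<in> \<A>) \<and>
     (\<forall>S\<in>\<A>. \<forall>T\<in>\<A>. S \<circ> T \<in> \<A>) \<and>
     {T\<in>bops. finite_rank T} \<subseteq> \<A>"

definition spectrum_op :: "('a::complex_banach \<Rightarrow> 'a) \<Rightarrow> complex set" where
  "spectrum_op T = {z. \<not> (\<exists>S\<in>bops. S \<circ> (\<lambda>x. T x - scaleC z x) = id \<and>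
                                     (\<lambda>x. T x - scaleC z x) \<circ> S = id)}"

definition spectral_radius_op :: "('a::complex_banach \<Rightarrow> 'a) \<Rightarrow> real" where
  "spectral_radius_op T = Sup (cmod ` spectrum_op T)"

definition peripheral_spectrum :: "('a::complex_banach \<Rightarrow> 'a) \<Rightarrow> complex set" where
  "peripheral_spectrum T = {z \<in> spectrum_op T. cmod z = spectral_radius_op T}"

end

theory Submission
  imports Defs
begin

text \<open>
  All information is extracted from operators of rank at most two. For a rank-one operator
  \<open>B = x \<otimes> f\<close>, the product \<open>B\<^sup>r A B\<^sup>s\<close> has rank at most one and its peripheral spectrum
  is the single point \<open>f(x)\<^sup>r\<^sup>+\<^sup>s\<^sup>-\<^sup>1 f(Ax)\<close>. Conversely, if \<open>T\<close> has rank at least two, a rank-two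
  operator \<open>S\<close> can be chosen such that \<open>S\<^sup>r T S\<^sup>s\<close> acts on a two-dimensional subspace with trace
  zero and nonzero determinant, so that its peripheral spectrum contains two opposite points.
  Hence \<open>T\<close> has rank at most one iff all these peripheral spectra are subsingletons, a property
  that \<open>\<Phi>\<close> preserves in both directions. Writing \<open>\<Phi>(B) = y \<otimes> g\<close> for rank-one \<open>B = x \<otimes> f\<close>,
  the preserver identity then gives \<open>g(y)\<^sup>r\<^sup>+\<^sup>s\<^sup>-\<^sup>1 g(\<Phi>(A) y) = f(x)\<^sup>r\<^sup>+\<^sup>s\<^sup>-\<^sup>1 f(Ax)\<close> for all \<open>A\<close>, so
  \<open>g(\<Phi>(A) y)\<close> depends linearly on \<open>A\<close>; by the Hahn-Banach theorem bounded functionals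
  separate points, which yields linearity, and the same identity with \<open>\<Phi>(A) = 0\<close> gives
  injectivity.
\<close>

global_interpretation complex_vector: vector_space "scaleC :: complex \<Rightarrow> 'a \<Rightarrow> 'a::complex_banach"
  by unfold_locales (simp_all add: scaleC_add_right scaleC_add_left scaleC_scaleC scaleC_one)

lemma scaleC_add_eq_0_solve:
  fixes x y :: "'a::complex_banach"
  assumes "scaleC c x + y = 0" and "c \<noteq> 0"
  shows "x = scaleC (- inverse c) y"
proof -
  have "x = scaleC (inverse c) (scaleC c x)" using assms(2) by simp
  also have "scaleC c x = - y" using assms(1) by (simp add: eq_neg_iff_add_eq_0)
  finally show ?thesis by simp
qed

lemma bopsD:
  assumes "T \<in> bops"
  shows "T (x + y) = T x + T y" "T (scaleC c x) = scaleC c (T x)" "T 0 = 0"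
    "T (- x) = - T x" "T (x - y) = T x - T y" "bounded_linear T"
  using assms unfolding bops_def by (auto simp: linear_simps)

lemma bopsI:
  assumes "\<And>x y. T (x + y) = T x + T y" "\<And>c x. T (scaleC c x) = scaleC c (T x)"
    and "\<And>x. norm (T x) \<le> norm x * K"
  shows "T \<in> bops"
  unfolding bops_def
proof (intro CollectI conjI allI)
  show "bounded_linear T"
    by (rule bounded_linear_intro[where K=K]) (auto simp: assms scaleR_scaleC)
qed (auto simp: assms)

lemma bops_comp: "S \<in> bops \<Longrightarrow> T \<in> bops \<Longrightarrow> S \<circ> T \<in> bops"
  unfolding bops_def comp_def by (auto intro: bounded_linear_compose)

lemma bops_ident: "(\<lambda>x. x) \<in> bops"
  unfolding bops_def by (auto intro: bounded_linear_ident)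

lemma bops_zero: "(\<lambda>x. 0) \<in> bops"
  unfolding bops_def by auto

lemma bops_add: "S \<in> bops \<Longrightarrow> T \<in> bops \<Longrightarrow> (\<lambda>x. S x + T x) \<in> bops"
  unfolding bops_def by (auto intro: bounded_linear_add simp: scaleC_add_right)

lemma bops_scaleC:
  assumes S: "S \<in> bops"
  shows "(\<lambda>x. scaleC c (S x)) \<in> bops"
proof -
  obtain K where K: "\<And>x. norm (S x) \<le> norm x * K"
    using bounded_linear.bounded[OF bopsD(6)[OF S]] by blast
  show ?thesis
  proof (rule bopsI[where K="cmod c * K"])
    show "norm (scaleC c (S x)) \<le> norm x * (cmod c * K)" for x
      using mult_left_mono[OF K[of x], of "cmod c"] by (simp add: norm_scaleC algebra_simps)
  qed (simp_all add: bopsD[OF S] scaleC_add_right mult.commute)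
qed

lemma bops_funpow: "T \<in> bops \<Longrightarrow> T ^^ n \<in> bops"
  by (induction n) (simp_all add: bops_ident[folded id_def] bops_comp)

lemma sandwich_zero: "B \<in> bops \<Longrightarrow> (B ^^ r) \<circ> (\<lambda>x. 0) \<circ> (B ^^ s) = (\<lambda>x. 0)"
  by (simp add: fun_eq_iff bopsD(3)[OF bops_funpow])


section \<open>The Hahn-Banach theorem\<close>

text \<open>
  \<open>G\<close> is the graph of a real-linear functional on a subspace which is dominated by the norm and
  attains it at \<open>x\<^sub>0\<close>; Zorn's lemma is applied to such graphs ordered by inclusion.
\<close>
definition dominated_graph :: "'a::real_normed_vector \<Rightarrow> ('a \<times> real) set \<Rightarrow> bool" where
  "dominated_graph x0 G \<longleftrightarrow> (\<forall>x a b. (x, a) \<in> G \<longrightarrow> (x, b) \<in> G \<longrightarrow> a = b)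
     \<and> (\<forall>x a y b. (x, a) \<in> G \<longrightarrow> (y, b) \<in> G \<longrightarrow> (x + y, a + b) \<in> G)
     \<and> (\<forall>x a t. (x, a) \<in> G \<longrightarrow> (t *\<^sub>R x, t * a) \<in> G)
     \<and> (\<forall>x a. (x, a) \<in> G \<longrightarrow> a \<le> norm x)
     \<and> (x0, norm x0) \<in> G"

lemma dominated_graphD:
  assumes "dominated_graph x0 G"
  shows "(x, a) \<in> G \<Longrightarrow> (x, b) \<in> G \<Longrightarrow> a = b"
    "(x, a) \<in> G \<Longrightarrow> (y, b) \<in> G \<Longrightarrow> (x + y, a + b) \<in> G"
    "(x, a) \<in> G \<Longrightarrow> (t *\<^sub>R x, t * a) \<in> G"
    "(x, a) \<in> G \<Longrightarrow> a \<le> norm x"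
    "(x0, norm x0) \<in> G"
  using assms unfolding dominated_graph_def by blast+

lemma dominated_extension_bound:
  fixes y :: "'a::real_normed_vector"
  assumes scale: "\<And>x a t. (x, a) \<in> M \<Longrightarrow> (t *\<^sub>R x, t * a) \<in> M"
    and bound: "\<And>x a. (x, a) \<in> M \<Longrightarrow> a \<le> norm x"
    and lower: "\<And>x a. (x, a) \<in> M \<Longrightarrow> a - norm (x - y) \<le> c"
    and upper: "\<And>x a. (x, a) \<in> M \<Longrightarrow> c \<le> norm (x + y) - a"
    and xa: "(x, a) \<in> M"
  shows "a + t * c \<le> norm (x + t *\<^sub>R y)"
proof (cases t "0::real" rule: linorder_cases)
  case less
  define u where "u = - t"
  have u: "u > 0" using less by (simp add: u_def)
  have "(1/u) * a - norm ((1/u) *\<^sub>R x - y) \<le> c" by (rule lower[OF scale[OF xa]])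
  then have "u * ((1/u) * a - norm ((1/u) *\<^sub>R x - y)) \<le> u * c"
    using u by (simp add: mult_left_mono)
  moreover have "u * norm ((1/u) *\<^sub>R x - y) = norm (x + t *\<^sub>R y)"
  proof -
    have "u * norm ((1/u) *\<^sub>R x - y) = norm (u *\<^sub>R ((1/u) *\<^sub>R x - y))" using u by simp
    also have "u *\<^sub>R ((1/u) *\<^sub>R x - y) = x + t *\<^sub>R y" using u by (simp add: u_def algebra_simps)
    finally show ?thesis .
  qed
  ultimately show ?thesis using u by (simp add: u_def right_diff_distrib)
next
  case equal
  then show ?thesis using bound[OF xa] by simp
next
  case greater
  have "c \<le> norm ((1/t) *\<^sub>R x + y) - (1/t) * a" by (rule upper[OF scale[OF xa]])
  then have "t * c \<le> t * (norm ((1/t) *\<^sub>R x + y) - (1/t) * a)"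
    using greater by (simp add: mult_left_mono)
  moreover have "t * norm ((1/t) *\<^sub>R x + y) = norm (x + t *\<^sub>R y)"
  proof -
    have "t * norm ((1/t) *\<^sub>R x + y) = norm (t *\<^sub>R ((1/t) *\<^sub>R x + y))" using greater by simp
    also have "t *\<^sub>R ((1/t) *\<^sub>R x + y) = x + t *\<^sub>R y" using greater by (simp add: algebra_simps)
    finally show ?thesis .
  qed
  ultimately show ?thesis using greater by (simp add: right_diff_distrib)
qed

lemma dominated_graph_extend:
  fixes M :: "('a::real_normed_vector \<times> real) set"
  assumes M: "dominated_graph x0 M" and y: "\<forall>a. (y, a) \<notin> M"
  shows "\<exists>G. dominated_graph x0 G \<and> M \<subset> G"
proof -
  note sv = dominated_graphD(1)[OF M] and ad = dominated_graphD(2)[OF M]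
    and sc = dominated_graphD(3)[OF M] and bd = dominated_graphD(4)[OF M]
  have zero: "(0, 0) \<in> M" using sc[OF dominated_graphD(5)[OF M], of 0] by simp
  define L where "L = {a - norm (x - y) | x a. (x, a) \<in> M}"
  have key: "a - norm (x - y) \<le> norm (x' + y) - a'" if "(x, a) \<in> M" "(x', a') \<in> M" for x a x' a'
  proof -
    have "a + a' \<le> norm (x + x')" using bd[OF ad[OF that]] .
    also have "x + x' = (x - y) + (x' + y)" by simp
    also have "norm \<dots> \<le> norm (x - y) + norm (x' + y)" by (rule norm_triangle_ineq)
    finally show ?thesis by simp
  qed
  have L: "L \<noteq> {}" "bdd_above L"
    using zero key[OF _ zero] unfolding L_def bdd_above_def by auto
  define c where "c = Sup L"
  have lower: "a - norm (x - y) \<le> c" if "(x, a) \<in> M" for x a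
    unfolding c_def by (rule cSup_upper[OF _ L(2)]) (use that L_def in blast)
  have upper: "c \<le> norm (x' + y) - a'" if "(x', a') \<in> M" for x' a'
    unfolding c_def by (rule cSup_least[OF L(1)]) (use key[OF _ that] L_def in blast)
  define G where "G = {(x + t *\<^sub>R y, a + t * c) | x a t. (x, a) \<in> M}"
  have inG: "(x + t *\<^sub>R y, a + t * c) \<in> G" if "(x, a) \<in> M" for x a t
    unfolding G_def using that by blast
  have "M \<subseteq> G" using inG[of _ _ 0] by auto
  moreover have "G \<noteq> M" using inG[OF zero, of 1] y by auto
  moreover have "dominated_graph x0 G"
    unfolding dominated_graph_def
  proof (intro conjI allI impI)
    fix z a b assume "(z, a) \<in> G" "(z, b) \<in> G"
    then obtain x1 a1 t1 x2 a2 t2 where 1: "z = x1 + t1 *\<^sub>R y" "a = a1 + t1 * c" "(x1, a1) \<in> M"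
      and 2: "z = x2 + t2 *\<^sub>R y" "b = a2 + t2 * c" "(x2, a2) \<in> M"
      unfolding G_def by blast
    have t: "t1 = t2"
    proof (rule ccontr)
      assume ne: "t1 \<noteq> t2"
      have "(x1 + (-1) *\<^sub>R x2, a1 + (-1) * a2) \<in> M" using ad[OF 1(3) sc[OF 2(3)]] .
      moreover have "x1 - x2 = (t2 - t1) *\<^sub>R y" using 1(1) 2(1) by (simp add: algebra_simps)
      then have "y = (1 / (t2 - t1)) *\<^sub>R (x1 + (-1) *\<^sub>R x2)" using ne by simp
      ultimately show False using sc y by metis
    qed
    then have "x1 = x2" using 1(1) 2(1) by simp
    then show "a = b" using sv 1 2 t by blast
  next
    fix z a w b assume "(z, a) \<in> G" "(w, b) \<in> G"
    then obtain x1 a1 t1 x2 a2 t2 where "z = x1 + t1 *\<^sub>R y" "a = a1 + t1 * c" "(x1, a1) \<in> M"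
      and "w = x2 + t2 *\<^sub>R y" "b = a2 + t2 * c" "(x2, a2) \<in> M"
      unfolding G_def by blast
    with inG[OF ad, of x1 a1 x2 a2 "t1 + t2"] show "(z + w, a + b) \<in> G"
      by (simp add: algebra_simps)
  next
    fix z a t assume "(z, a) \<in> G"
    then obtain x1 a1 t1 where "z = x1 + t1 *\<^sub>R y" "a = a1 + t1 * c" "(x1, a1) \<in> M"
      unfolding G_def by blast
    with inG[OF sc, of x1 a1 t "t * t1"] show "(t *\<^sub>R z, t * a) \<in> G"
      by (simp add: algebra_simps)
  next
    fix z a assume "(z, a) \<in> G"
    then obtain x1 a1 t where "z = x1 + t *\<^sub>R y" "a = a1 + t * c" "(x1, a1) \<in> M"
      unfolding G_def by blast
    then show "a \<le> norm z"
      using dominated_extension_bound[OF sc bd lower upper] by blast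
  next
    show "(x0, norm x0) \<in> G" using \<open>M \<subseteq> G\<close> dominated_graphD(5)[OF M] by blast
  qed
  ultimately show ?thesis by blast
qed

lemma dominated_graph_line: "dominated_graph x0 {(t *\<^sub>R x0, t * norm x0) | t. True}"
  (is "dominated_graph x0 ?L")
  unfolding dominated_graph_def
proof (intro conjI allI impI)
  fix x a b assume "(x, a) \<in> ?L" "(x, b) \<in> ?L"
  then obtain t1 t2 where "x = t1 *\<^sub>R x0" "a = t1 * norm x0" "x = t2 *\<^sub>R x0" "b = t2 * norm x0"
    by blast
  then show "a = b" by (metis norm_zero mult_zero_right scaleR_cancel_right)
next
  fix x a y b assume "(x, a) \<in> ?L" "(y, b) \<in> ?L"
  then obtain t1 t2 where "x = t1 *\<^sub>R x0" "a = t1 * norm x0" "y = t2 *\<^sub>R x0" "b = t2 * norm x0"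
    by blast
  then show "(x + y, a + b) \<in> ?L" by (auto intro!: exI[of _ "t1 + t2"] simp: algebra_simps)
next
  fix x a t assume "(x, a) \<in> ?L"
  then obtain t1 where "x = t1 *\<^sub>R x0" "a = t1 * norm x0" by blast
  then show "(t *\<^sub>R x, t * a) \<in> ?L" by (auto intro!: exI[of _ "t * t1"])
next
  fix x a assume "(x, a) \<in> ?L"
  then show "a \<le> norm x" by (auto simp: mult_right_mono)
next
  show "(x0, norm x0) \<in> ?L" by (auto intro!: exI[of _ 1])
qed

lemma dominated_graph_chain_Union:
  assumes C: "C \<in> chains {G. dominated_graph x0 G}" "C \<noteq> {}"
  shows "dominated_graph x0 (\<Union>C)"
proof -
  have good: "\<And>X. X \<in> C \<Longrightarrow> dominated_graph x0 X" and ch: "\<And>X Y. X \<in> C \<Longrightarrow> Y \<in> C \<Longrightarrow> X \<subseteq> Y \<or> Y \<subseteq> X"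
    using C(1) unfolding chains_def chain_subset_def by blast+
  show ?thesis
    unfolding dominated_graph_def
  proof (intro conjI allI impI)
    fix x a b assume "(x, a) \<in> \<Union>C" "(x, b) \<in> \<Union>C"
    then obtain X Y where "X \<in> C" "Y \<in> C" "(x, a) \<in> X" "(x, b) \<in> Y" by blast
    then show "a = b" using ch[of X Y] dominated_graphD(1)[OF good] by blast
  next
    fix x a y b assume "(x, a) \<in> \<Union>C" "(y, b) \<in> \<Union>C"
    then obtain X Y where "X \<in> C" "Y \<in> C" "(x, a) \<in> X" "(y, b) \<in> Y" by blast
    then show "(x + y, a + b) \<in> \<Union>C"
      using ch[of X Y] dominated_graphD(2)[OF good] by (meson UnionI subsetD)
  next
    fix x a t assume "(x, a) \<in> \<Union>C"
    then show "(t *\<^sub>R x, t * a) \<in> \<Union>C" using dominated_graphD(3)[OF good] by blast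
  next
    fix x a assume "(x, a) \<in> \<Union>C"
    then show "a \<le> norm x" using dominated_graphD(4)[OF good] by blast
  next
    show "(x0, norm x0) \<in> \<Union>C" using C(2) dominated_graphD(5)[OF good] by blast
  qed
qed

lemma real_norming_functional:
  fixes x0 :: "'a::real_normed_vector"
  shows "\<exists>g. linear g \<and> (\<forall>x. g x \<le> norm x) \<and> g x0 = norm x0"
proof -
  define \<G> where "\<G> = {G. dominated_graph x0 G}"
  have "\<forall>C\<in>chains \<G>. \<exists>U\<in>\<G>. \<forall>X\<in>C. X \<subseteq> U"
  proof
    fix C assume C: "C \<in> chains \<G>"
    show "\<exists>U\<in>\<G>. \<forall>X\<in>C. X \<subseteq> U"
    proof (cases "C = {}")
      case True
      then show ?thesis using dominated_graph_line unfolding \<G>_def by blast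
    next
      case False
      then show ?thesis using dominated_graph_chain_Union[OF C[unfolded \<G>_def]] unfolding \<G>_def by blast
    qed
  qed
  from Zorn_Lemma2[OF this] obtain M where M: "dominated_graph x0 M"
    and max: "\<And>G. dominated_graph x0 G \<Longrightarrow> M \<subseteq> G \<Longrightarrow> G = M"
    unfolding \<G>_def by blast
  have total: "\<exists>a. (y, a) \<in> M" for y
    using dominated_graph_extend[OF M] max by blast
  define g where "g x = (THE a. (x, a) \<in> M)" for x
  have gM: "(x, a) \<in> M \<longleftrightarrow> g x = a" for x a
    using total dominated_graphD(1)[OF M] unfolding g_def by (metis theI)
  show ?thesis
  proof (intro exI conjI allI)
    show "linear g"
    proof (rule linearI)
      show "g (x + y) = g x + g y" for x y
        using dominated_graphD(2)[OF M] gM by blast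
      show "g (t *\<^sub>R x) = t *\<^sub>R g x" for t x
        using dominated_graphD(3)[OF M] gM by simp
    qed
    show "g x \<le> norm x" for x using dominated_graphD(4)[OF M] gM by blast
    show "g x0 = norm x0" using dominated_graphD(5)[OF M] gM by blast
  qed
qed


section \<open>Bounded complex-linear functionals\<close>

definition clinear_functional :: "('a::complex_banach \<Rightarrow> complex) \<Rightarrow> bool" where
  "clinear_functional f \<longleftrightarrow> (\<forall>x y. f (x + y) = f x + f y) \<and> (\<forall>c x. f (scaleC c x) = c * f x)"

lemma clinear_functionalD:
  assumes "clinear_functional f"
  shows "f (x + y) = f x + f y" "f (scaleC c x) = c * f x" "f 0 = 0" "f (- x) = - f x"
    "f (x - y) = f x - f y"
proof -
  have add: "\<And>x y. f (x + y) = f x + f y" and scale: "\<And>c x. f (scaleC c x) = c * f x"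
    using assms unfolding clinear_functional_def by blast+
  show "f (x + y) = f x + f y" "f (scaleC c x) = c * f x" by (fact add scale)+
  show "f 0 = 0" using scale[of 0 0] by simp
  show minus: "f (- x) = - f x" for x using scale[of "-1" x] by simp
  show "f (x - y) = f x - f y" using add[of x "- y"] minus[of y] by simp
qed

definition cdual :: "('a::complex_banach \<Rightarrow> complex) set" where
  "cdual = {g. clinear_functional g \<and> (\<exists>K. \<forall>x. cmod (g x) \<le> K * norm x)}"

lemma cdual_clinear: "g \<in> cdual \<Longrightarrow> clinear_functional g"
  unfolding cdual_def by blast

lemmas cdualD = clinear_functionalD[OF cdual_clinear]

lemma cdual_bound: "g \<in> cdual \<Longrightarrow> \<exists>K. \<forall>x. cmod (g x) \<le> K * norm x"
  unfolding cdual_def by blast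

lemma cdualI:
  assumes "\<And>x y. g (x + y) = g x + g y" "\<And>c x. g (scaleC c x) = c * g x"
    and "\<And>x. cmod (g x) \<le> K * norm x"
  shows "g \<in> cdual"
  unfolding cdual_def clinear_functional_def using assms by blast

lemma cdual_apply_sum: "g \<in> cdual \<Longrightarrow> g (sum f S) = (\<Sum>i\<in>S. g (f i))"
  by (induction S rule: infinite_finite_induct) (auto simp: cdualD)

lemma cdual_zero: "(\<lambda>x. 0) \<in> cdual"
  by (rule cdualI[where K=0]) auto

lemma cdual_add:
  assumes g: "g \<in> cdual" and h: "h \<in> cdual"
  shows "(\<lambda>x. g x + h x) \<in> cdual"
proof -
  obtain K1 K2 where K1: "\<And>x. cmod (g x) \<le> K1 * norm x" and K2: "\<And>x. cmod (h x) \<le> K2 * norm x"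
    using cdual_bound[OF g] cdual_bound[OF h] by blast
  have "cmod (g x + h x) \<le> (K1 + K2) * norm x" for x
    using norm_triangle_ineq[of "g x" "h x"] K1[of x] K2[of x] by (simp add: algebra_simps)
  then show ?thesis by (intro cdualI[where K="K1 + K2"]) (auto simp: cdualD[OF g] cdualD[OF h] algebra_simps)
qed

lemma cdual_mult:
  assumes g: "g \<in> cdual"
  shows "(\<lambda>x. c * g x) \<in> cdual"
proof -
  obtain K where K: "\<And>x. cmod (g x) \<le> K * norm x" using cdual_bound[OF g] by blast
  have "cmod (c * g x) \<le> (cmod c * K) * norm x" for x
    using mult_left_mono[OF K[of x], of "cmod c"] by (simp add: norm_mult algebra_simps)
  then show ?thesis by (intro cdualI[where K="cmod c * K"]) (auto simp: cdualD[OF g] algebra_simps)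
qed

lemma cdual_sum: "(\<And>i. i \<in> S \<Longrightarrow> g i \<in> cdual) \<Longrightarrow> (\<lambda>x. \<Sum>i\<in>S. g i x) \<in> cdual"
  by (induction S rule: infinite_finite_induct) (simp_all add: cdual_zero cdual_add)

lemma cdual_comp_bops:
  assumes g: "g \<in> cdual" and T: "T \<in> bops"
  shows "(\<lambda>x. g (T x)) \<in> cdual"
proof -
  obtain K1 where K1: "\<And>x. cmod (g x) \<le> K1 * norm x" using cdual_bound[OF g] by blast
  obtain K2 where K2: "\<And>x. norm (T x) \<le> norm x * K2"
    using bounded_linear.bounded[OF bopsD(6)[OF T]] by blast
  have "cmod (g (T x)) \<le> (\<bar>K1\<bar> * K2) * norm x" for x
  proof -
    have "cmod (g (T x)) \<le> \<bar>K1\<bar> * norm (T x)"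
      using K1[of "T x"] by (meson abs_ge_self mult_right_mono norm_ge_zero order_trans)
    also have "\<dots> \<le> \<bar>K1\<bar> * (norm x * K2)" using K2[of x] by (simp add: mult_left_mono)
    finally show ?thesis by (simp add: algebra_simps)
  qed
  then show ?thesis by (intro cdualI[where K="\<bar>K1\<bar> * K2"]) (auto simp: cdualD[OF g] bopsD[OF T])
qed

lemma scaleC_Re_Im: "scaleC c x = Re c *\<^sub>R x + Im c *\<^sub>R scaleC \<i> (x::'a::complex_banach)"
proof -
  have "Re c *\<^sub>R x + Im c *\<^sub>R scaleC \<i> x = scaleC (complex_of_real (Re c) + complex_of_real (Im c) * \<i>) x"
    by (simp add: scaleR_scaleC scaleC_add_left)
  also have "complex_of_real (Re c) + complex_of_real (Im c) * \<i> = c"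
    by (simp add: complex_eq_iff)
  finally show ?thesis by simp
qed

text \<open>The complex Hahn-Banach theorem, via the complexification \<open>x \<mapsto> g x - \<i> g (\<i> x)\<close> of a
  real norming functional \<open>g\<close>.\<close>
lemma cdual_exists_eq_1:
  fixes x0 :: "'a::complex_banach"
  assumes x0: "x0 \<noteq> 0"
  shows "\<exists>g\<in>cdual. g x0 = 1"
proof -
  obtain g where g: "linear g" and gb: "\<And>x. g x \<le> norm x" and g0: "g x0 = norm x0"
    using real_norming_functional[of x0] by blast
  have gadd: "g (x + y) = g x + g y" and gsc: "g (t *\<^sub>R x) = t * g x" for x y t
    using linear_add[OF g] linear_scale[OF g] by simp_all
  have gabs: "\<bar>g x\<bar> \<le> norm x" for x
    using gb[of x] gb[of "- x"] linear_neg[OF g, of x] by simp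
  define h where "h x = complex_of_real (g x) - \<i> * complex_of_real (g (scaleC \<i> x))" for x
  have gC: "g (scaleC c x) = Re c * g x + Im c * g (scaleC \<i> x)" for c x
    by (subst scaleC_Re_Im) (simp add: gadd gsc)
  have hadd: "h (x + y) = h x + h y" for x y
    unfolding h_def by (simp add: gadd algebra_simps)
  have hsc: "h (scaleC c x) = c * h x" for c x
  proof -
    have "g (scaleC \<i> (scaleC c x)) = - Im c * g x + Re c * g (scaleC \<i> x)"
      using gC[of "\<i> * c" x] by simp
    moreover have "complex_of_real (Re c * p + Im c * q) - \<i> * complex_of_real (- Im c * p + Re c * q)
        = c * (complex_of_real p - \<i> * complex_of_real q)" for p q
      by (simp add: complex_eq_iff)
    ultimately show ?thesis unfolding h_def gC[of c x] by simp
  qed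
  have hb: "cmod (h x) \<le> 2 * norm x" for x
  proof -
    have "cmod (h x) \<le> cmod (complex_of_real (g x)) + cmod (\<i> * complex_of_real (g (scaleC \<i> x)))"
      unfolding h_def by (rule norm_triangle_ineq4)
    also have "\<dots> = \<bar>g x\<bar> + \<bar>g (scaleC \<i> x)\<bar>" by (simp add: norm_mult)
    also have "\<dots> \<le> 2 * norm x" using gabs[of x] gabs[of "scaleC \<i> x"] by (simp add: norm_scaleC)
    finally show ?thesis .
  qed
  have hx0: "h x0 \<noteq> 0"
  proof
    assume "h x0 = 0"
    then have "Re (h x0) = 0" by simp
    then show False using g0 x0 unfolding h_def by simp
  qed
  have "(\<lambda>x. h x / h x0) \<in> cdual"
  proof (rule cdualI)
    show "h (x + y) / h x0 = h x / h x0 + h y / h x0" for x y by (simp add: hadd add_divide_distrib)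
    show "h (scaleC c x) / h x0 = c * (h x / h x0)" for c x by (simp add: hsc)
    show "cmod (h x / h x0) \<le> (2 / cmod (h x0)) * norm x" for x
      using hb[of x] hx0 by (simp add: norm_divide divide_right_mono)
  qed
  then show ?thesis using hx0 by (intro bexI[of _ "\<lambda>x. h x / h x0"]) simp_all
qed

lemma cdual_separation:
  fixes y u u' :: "'a::complex_banach"
  assumes y: "y \<noteq> 0" and agree: "\<And>g. g \<in> cdual \<Longrightarrow> g y \<noteq> 0 \<Longrightarrow> g u = g u'"
  shows "u = u'"
proof (rule ccontr)
  assume "u \<noteq> u'"
  then have "u - u' \<noteq> 0" by simp
  then obtain g2 where g2: "g2 \<in> cdual" "g2 (u - u') = 1" using cdual_exists_eq_1 by blast
  obtain g1 where g1: "g1 \<in> cdual" "g1 y = 1" using cdual_exists_eq_1[OF y] by blast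
  have vanish: "g (u - u') = 0" if "g \<in> cdual" "g y \<noteq> 0" for g
    using agree[OF that] cdualD(5)[OF that(1)] by simp
  have g1u: "g1 (u - u') = 0" using vanish g1 by simp
  \<comment> \<open>\<open>g1 + t g2\<close> is nonzero at \<open>y\<close> for \<open>t = 1\<close> or \<open>t = -1\<close>, but takes the value \<open>t\<close> at \<open>u - u'\<close>.\<close>
  obtain t :: complex where t: "t \<noteq> 0" "1 + t * g2 y \<noteq> 0"
  proof (cases "1 + g2 y = 0")
    case True
    then have "1 + (-1) * g2 y = 2" by (simp add: add_eq_0_iff)
    then show ?thesis using that[of "-1"] by simp
  next
    case False
    then show ?thesis using that[of 1] by simp
  qed
  have "(\<lambda>x. g1 x + t * g2 x) \<in> cdual" by (intro cdual_add cdual_mult g1(1) g2(1))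
  moreover have "g1 y + t * g2 y \<noteq> 0" using g1 t by simp
  ultimately have "g1 (u - u') + t * g2 (u - u') = 0" using vanish by blast
  then show False using g1u g2 t by simp
qed

lemma bops_eq_cdual_separation:
  assumes u: "u \<in> bops" and u': "u' \<in> bops"
    and agree: "\<And>y g. g \<in> cdual \<Longrightarrow> g y \<noteq> 0 \<Longrightarrow> g (u y) = g (u' y)"
  shows "u = u'"
proof
  fix y
  show "u y = u' y"
  proof (cases "y = 0")
    case True
    then show ?thesis using bopsD(3)[OF u] bopsD(3)[OF u'] by simp
  next
    case False
    then show ?thesis by (rule cdual_separation) (rule agree)
  qed
qed


section \<open>Interpolation by bounded functionals\<close>

definition cindependent :: "'a::complex_banach list \<Rightarrow> bool" where
  "cindependent vs \<longleftrightarrow> (\<forall>c. (\<Sum>i<length vs. scaleC (c i) (vs ! i)) = 0 \<longrightarrow> (\<forall>i<length vs. c i = 0))"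

lemma cindependent_pair_iff:
  "cindependent [a, b] \<longleftrightarrow> (\<forall>\<alpha> \<beta>. scaleC \<alpha> a + scaleC \<beta> b = 0 \<longrightarrow> \<alpha> = 0 \<and> \<beta> = 0)"
  unfolding cindependent_def
proof (intro iffI allI impI)
  fix \<alpha> \<beta> assume "\<forall>c. (\<Sum>i<length [a, b]. scaleC (c i) ([a, b] ! i)) = 0 \<longrightarrow> (\<forall>i<length [a, b]. c i = 0)"
    and "scaleC \<alpha> a + scaleC \<beta> b = 0"
  then show "\<alpha> = 0 \<and> \<beta> = 0"
    by (auto dest!: spec[of _ "(!) [\<alpha>, \<beta>]"] simp: numeral_eq_Suc lessThan_Suc ac_simps)
next
  fix c i assume "\<forall>\<alpha> \<beta>. scaleC \<alpha> a + scaleC \<beta> b = 0 \<longrightarrow> \<alpha> = 0 \<and> \<beta> = 0"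
    and "(\<Sum>i<length [a, b]. scaleC (c i) ([a, b] ! i)) = 0" "i < length [a, b]"
  then show "c i = 0" by (auto simp: numeral_eq_Suc lessThan_Suc less_Suc_eq ac_simps)
qed

lemma cindependent_triple_iff:
  "cindependent [a, b, d] \<longleftrightarrow>
    (\<forall>\<alpha> \<beta> \<gamma>. scaleC \<alpha> a + scaleC \<beta> b + scaleC \<gamma> d = 0 \<longrightarrow> \<alpha> = 0 \<and> \<beta> = 0 \<and> \<gamma> = 0)"
  unfolding cindependent_def
proof (intro iffI allI impI)
  fix \<alpha> \<beta> \<gamma> assume "\<forall>c. (\<Sum>i<length [a, b, d]. scaleC (c i) ([a, b, d] ! i)) = 0 \<longrightarrow> (\<forall>i<length [a, b, d]. c i = 0)"
    and "scaleC \<alpha> a + scaleC \<beta> b + scaleC \<gamma> d = 0"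
  then show "\<alpha> = 0 \<and> \<beta> = 0 \<and> \<gamma> = 0"
    by (auto dest!: spec[of _ "(!) [\<alpha>, \<beta>, \<gamma>]"] simp: numeral_eq_Suc lessThan_Suc ac_simps)
next
  fix c i assume "\<forall>\<alpha> \<beta> \<gamma>. scaleC \<alpha> a + scaleC \<beta> b + scaleC \<gamma> d = 0 \<longrightarrow> \<alpha> = 0 \<and> \<beta> = 0 \<and> \<gamma> = 0"
    and "(\<Sum>i<length [a, b, d]. scaleC (c i) ([a, b, d] ! i)) = 0" "i < length [a, b, d]"
  then show "c i = 0" by (auto simp: numeral_eq_Suc lessThan_Suc less_Suc_eq ac_simps)
qed

lemma cindependent_quadruple_iff:
  "cindependent [a, b, d, e] \<longleftrightarrow> (\<forall>\<alpha> \<beta> \<gamma> \<delta>.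
    scaleC \<alpha> a + scaleC \<beta> b + scaleC \<gamma> d + scaleC \<delta> e = 0 \<longrightarrow> \<alpha> = 0 \<and> \<beta> = 0 \<and> \<gamma> = 0 \<and> \<delta> = 0)"
  unfolding cindependent_def
proof (intro iffI allI impI)
  fix \<alpha> \<beta> \<gamma> \<delta>
  assume "\<forall>c. (\<Sum>i<length [a, b, d, e]. scaleC (c i) ([a, b, d, e] ! i)) = 0 \<longrightarrow> (\<forall>i<length [a, b, d, e]. c i = 0)"
    and "scaleC \<alpha> a + scaleC \<beta> b + scaleC \<gamma> d + scaleC \<delta> e = 0"
  then show "\<alpha> = 0 \<and> \<beta> = 0 \<and> \<gamma> = 0 \<and> \<delta> = 0"
    by (auto dest!: spec[of _ "(!) [\<alpha>, \<beta>, \<gamma>, \<delta>]"] simp: numeral_eq_Suc lessThan_Suc less_Suc_eq ac_simps)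
next
  fix c i assume "\<forall>\<alpha> \<beta> \<gamma> \<delta>. scaleC \<alpha> a + scaleC \<beta> b + scaleC \<gamma> d + scaleC \<delta> e = 0 \<longrightarrow>
      \<alpha> = 0 \<and> \<beta> = 0 \<and> \<gamma> = 0 \<and> \<delta> = 0"
    and "(\<Sum>i<length [a, b, d, e]. scaleC (c i) ([a, b, d, e] ! i)) = 0" "i < length [a, b, d, e]"
  then show "c i = 0" by (auto simp: numeral_eq_Suc lessThan_Suc less_Suc_eq ac_simps)
qed

lemma cdual_biorthogonal:
  assumes indep: "cindependent vs" and n: "n \<le> length vs"
  shows "\<exists>g. \<forall>i<n. g i \<in> cdual \<and> (\<forall>j<n. g i (vs ! j) = (if i = j then 1 else 0))"
  using n
proof (induction n)
  case 0
  then show ?case by simp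
next
  case (Suc n)
  then obtain g where gd: "\<And>i. i < n \<Longrightarrow> g i \<in> cdual"
    and gv: "\<And>i j. i < n \<Longrightarrow> j < n \<Longrightarrow> g i (vs ! j) = (if i = j then 1 else 0)"
    by auto
  define w where "w = vs ! n - (\<Sum>j<n. scaleC (g j (vs ! n)) (vs ! j))"
  have "w \<noteq> 0"
  proof
    assume "w = 0"
    define c where "c i = (if i = n then 1 else if i < n then - g i (vs ! n) else 0)" for i
    have "(\<Sum>i<length vs. scaleC (c i) (vs ! i)) = (\<Sum>i<Suc n. scaleC (c i) (vs ! i))"
      using Suc.prems by (intro sum.mono_neutral_right) (auto simp: c_def)
    also have "(\<Sum>i<n. scaleC (c i) (vs ! i)) = - (\<Sum>j<n. scaleC (g j (vs ! n)) (vs ! j))"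
      by (simp add: c_def sum_negf)
    then have "(\<Sum>i<Suc n. scaleC (c i) (vs ! i)) = w"
      by (simp add: c_def w_def)
    finally have "c n = 0" using indep Suc.prems \<open>w = 0\<close> unfolding cindependent_def by auto
    then show False by (simp add: c_def)
  qed
  then obtain h0 where h0: "h0 \<in> cdual" "h0 w = 1" using cdual_exists_eq_1 by blast
  define h where "h x = h0 x - (\<Sum>j<n. h0 (vs ! j) * g j x)" for x
  have "(\<lambda>x. \<Sum>j<n. h0 (vs ! j) * g j x) \<in> cdual" by (intro cdual_sum cdual_mult gd) simp
  then have "(\<lambda>x. h0 x + (-1) * (\<Sum>j<n. h0 (vs ! j) * g j x)) \<in> cdual"
    by (intro cdual_add h0(1) cdual_mult)
  then have hd: "h \<in> cdual" unfolding h_def by simp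
  have hv: "h (vs ! i) = 0" if i: "i < n" for i
  proof -
    have "(\<Sum>j<n. h0 (vs ! j) * g j (vs ! i)) = h0 (vs ! i)"
      using i by (simp add: gv if_distrib cong: if_cong)
    then show ?thesis unfolding h_def by simp
  qed
  have hn: "h (vs ! n) = 1"
  proof -
    have "h0 w = h0 (vs ! n) - (\<Sum>j<n. g j (vs ! n) * h0 (vs ! j))"
      unfolding w_def by (simp add: cdualD[OF h0(1)] cdual_apply_sum[OF h0(1)])
    then show ?thesis using h0(2) unfolding h_def by (simp add: mult.commute)
  qed
  \<comment> \<open>Correct the old functionals by multiples of \<open>h\<close> so that they vanish at \<open>vs ! n\<close>.\<close>
  define g' where "g' i = (if i = n then h else (\<lambda>x. g i x + (- g i (vs ! n)) * h x))" for i
  have "\<forall>i<Suc n. g' i \<in> cdual \<and> (\<forall>j<Suc n. g' i (vs ! j) = (if i = j then 1 else 0))"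
  proof (intro allI impI conjI)
    fix i assume i: "i < Suc n"
    show "g' i \<in> cdual"
    proof (cases "i = n")
      case False
      then have "(\<lambda>x. g i x + (- g i (vs ! n)) * h x) \<in> cdual"
        using i by (intro cdual_add cdual_mult gd hd) simp
      then show ?thesis using False by (simp add: g'_def)
    qed (simp add: g'_def hd)
    fix j assume j: "j < Suc n"
    show "g' i (vs ! j) = (if i = j then 1 else 0)"
      using i j hv hn gv by (auto simp: g'_def less_Suc_eq)
  qed
  then show ?case by blast
qed

lemma cdual_interpolation:
  assumes indep: "cindependent vs" and len: "length ws = length vs"
  shows "\<exists>k\<in>cdual. map k vs = ws"
proof -
  obtain g where gd: "\<And>i. i < length vs \<Longrightarrow> g i \<in> cdual"
    and gv: "\<And>i j. i < length vs \<Longrightarrow> j < length vs \<Longrightarrow> g i (vs ! j) = (if i = j then 1 else 0)"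
    using cdual_biorthogonal[OF indep order.refl] by blast
  define k where "k x = (\<Sum>i<length vs. ws ! i * g i x)" for x
  have "k \<in> cdual" unfolding k_def by (intro cdual_sum cdual_mult gd) simp
  moreover have "map k vs = ws"
  proof (rule nth_equalityI)
    fix j assume "j < length (map k vs)"
    then show "map k vs ! j = ws ! j"
      by (simp add: k_def gv if_distrib cong: if_cong)
  qed (simp add: len)
  ultimately show ?thesis by blast
qed


section \<open>Peripheral spectra of operators satisfying polynomial identities\<close>

lemma eigenvalue_in_spectrum_op:
  fixes Z :: "'a::complex_banach \<Rightarrow> 'a"
  assumes v: "v \<noteq> 0" and ev: "Z v = scaleC z v"
  shows "z \<in> spectrum_op Z"
  unfolding spectrum_op_def
proof clarify
  fix S assume S: "S \<in> bops" and "S \<circ> (\<lambda>x. Z x - scaleC z x) = id"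
  then have "v = S 0" using ev by (metis comp_apply diff_self id_apply)
  then show False using v bopsD(3)[OF S] by simp
qed

lemma notin_spectrum_opI:
  fixes Z :: "'a::complex_banach \<Rightarrow> 'a"
  assumes "S \<in> bops" "\<And>x. S (Z x - scaleC z x) = x" "\<And>x. Z (S x) - scaleC z (S x) = x"
  shows "z \<notin> spectrum_op Z"
  unfolding spectrum_op_def using assms by (auto simp: fun_eq_iff)

lemma spectrum_op_quadratic:
  fixes K :: "'a::complex_banach \<Rightarrow> 'a"
  assumes K: "K \<in> bops" and q: "\<And>x. K (K x) = scaleC c (K x)"
  shows "spectrum_op K \<subseteq> {0, c}"
proof
  fix z assume z: "z \<in> spectrum_op K"
  show "z \<in> {0, c}"
  proof (rule ccontr)
    assume "z \<notin> {0, c}"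
    then have z0: "z \<noteq> 0" and zc: "c - z \<noteq> 0" by auto
    define a where "a = 1 / (z * (c - z))"
    define b where "b = - 1 / z"
    have e1: "a * c + b - a * z = 0" and e2: "b * z = -1"
      unfolding a_def b_def using z0 zc by (simp_all add: field_simps)
    define S where "S x = scaleC a (K x) + scaleC b x" for x
    have S: "S \<in> bops" unfolding S_def by (intro bops_add bops_scaleC K bops_ident)
    have key: "scaleC (a * c + b - a * z) (K x) - scaleC (b * z) x = x" for x
      using e1 e2 by simp
    have "z \<notin> spectrum_op K"
    proof (rule notin_spectrum_opI[OF S])
      show "S (K x - scaleC z x) = x" "K (S x) - scaleC z (S x) = x" for x
        using key[of x] unfolding S_def
        by (simp_all add: bopsD[OF K] q algebra_simps)
    qed
    then show False using z by blast
  qed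
qed

lemma spectrum_op_cubic:
  fixes Z :: "'a::complex_banach \<Rightarrow> 'a"
  assumes Z: "Z \<in> bops" and q: "\<And>x. Z (Z (Z x)) = scaleC (\<mu> * \<mu>) (Z x)"
  shows "spectrum_op Z \<subseteq> {0, \<mu>, - \<mu>}"
proof
  fix z assume z: "z \<in> spectrum_op Z"
  show "z \<in> {0, \<mu>, - \<mu>}"
  proof (rule ccontr)
    assume "z \<notin> {0, \<mu>, - \<mu>}"
    then have z0: "z \<noteq> 0" and zc: "\<mu> * \<mu> - z * z \<noteq> 0" by (auto simp: square_eq_iff)
    define a where "a = 1 / (z * (\<mu> * \<mu> - z * z))"
    define d where "d = - 1 / z"
    have e1: "a * (\<mu> * \<mu>) + d - a * z * z = 0" and e2: "d * z = -1"
      unfolding a_def d_def using z0 zc by (simp_all add: field_simps)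
    define S where "S x = scaleC a (Z (Z x)) + scaleC (a * z) (Z x) + scaleC d x" for x
    have S: "S \<in> bops" unfolding S_def
      by (intro bops_add bops_scaleC Z bops_ident bops_comp[OF Z Z, unfolded comp_def])
    have key: "scaleC (a * (\<mu> * \<mu>) + d - a * z * z) (Z x) - scaleC (d * z) x = x" for x
      using e1 e2 by simp
    have "z \<notin> spectrum_op Z"
    proof (rule notin_spectrum_opI[OF S])
      show "S (Z x - scaleC z x) = x" "Z (S x) - scaleC z (S x) = x" for x
        using key[of x] unfolding S_def
        by (simp_all add: bopsD[OF Z] q algebra_simps)
    qed
    then show False using z by blast
  qed
qed

lemma peripheral_spectrum_if_max:
  assumes c: "c \<in> spectrum_op T" and max: "\<And>z. z \<in> spectrum_op T \<Longrightarrow> cmod z \<le> cmod c"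
  shows "peripheral_spectrum T = {z \<in> spectrum_op T. cmod z = cmod c}"
proof -
  have "spectral_radius_op T = cmod c"
    unfolding spectral_radius_op_def by (rule cSup_eq_maximum) (use c max in auto)
  then show ?thesis unfolding peripheral_spectrum_def by simp
qed

lemma peripheral_spectrum_quadratic:
  fixes K :: "'a::complex_banach \<Rightarrow> 'a"
  assumes nontrivial: "\<exists>v::'a. v \<noteq> 0" and K: "K \<in> bops" and q: "\<And>x. K (K x) = scaleC c (K x)"
    and nz: "c = 0 \<or> (\<exists>x. K x \<noteq> 0)"
  shows "peripheral_spectrum K = {c}"
proof -
  have sub: "spectrum_op K \<subseteq> {0, c}" using K q by (rule spectrum_op_quadratic)
  have "c \<in> spectrum_op K"
  proof (cases "\<exists>x. K x \<noteq> 0")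
    case True
    then obtain x where "K x \<noteq> 0" by blast
    then show ?thesis using q by (rule eigenvalue_in_spectrum_op)
  next
    case False
    with nz nontrivial obtain v :: 'a where "v \<noteq> 0" "c = 0" "K v = scaleC c v" by auto
    then show ?thesis by (intro eigenvalue_in_spectrum_op)
  qed
  with sub show ?thesis by (subst peripheral_spectrum_if_max) auto
qed

lemma peripheral_spectrum_cubic:
  fixes Z :: "'a::complex_banach \<Rightarrow> 'a"
  assumes Z: "Z \<in> bops" and q: "\<And>x. Z (Z (Z x)) = scaleC (\<mu> * \<mu>) (Z x)"
    and v1: "v1 \<noteq> 0" "Z v1 = scaleC \<mu> v1" and v2: "v2 \<noteq> 0" "Z v2 = scaleC (- \<mu>) v2"
  shows "\<mu> \<in> peripheral_spectrum Z" "- \<mu> \<in> peripheral_spectrum Z"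
proof -
  have sub: "spectrum_op Z \<subseteq> {0, \<mu>, - \<mu>}" using Z q by (rule spectrum_op_cubic)
  have "\<mu> \<in> spectrum_op Z" "- \<mu> \<in> spectrum_op Z"
    using eigenvalue_in_spectrum_op v1 v2 by blast+
  with sub show "\<mu> \<in> peripheral_spectrum Z" "- \<mu> \<in> peripheral_spectrum Z"
    by (subst peripheral_spectrum_if_max; auto)+
qed

lemma traceless_2x2_eigenvector:
  fixes t b e \<nu> :: complex
  assumes nu: "\<nu> \<noteq> 0" and det: "\<nu> * \<nu> = t * t + b * e"
  shows "\<exists>c1 c2. (c1 \<noteq> 0 \<or> c2 \<noteq> 0) \<and> c1 * t + c2 * b = \<nu> * c1 \<and> c1 * e - c2 * t = \<nu> * c2"
proof (cases "b = 0 \<and> \<nu> = t")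
  case True
  then show ?thesis using nu
    by (intro exI[of _ "\<nu> + t"] exI[of _ e]) (auto simp: algebra_simps)
next
  case False
  then show ?thesis using det
    by (intro exI[of _ b] exI[of _ "\<nu> - t"]) (auto simp: algebra_simps)
qed

lemma peripheral_spectrum_traceless_rank_two:
  fixes Z :: "'a::complex_banach \<Rightarrow> 'a"
  assumes Z: "Z \<in> bops" and Zd: "\<And>x. Z x = scaleC (f1 x) z1 + scaleC (f2 x) z2"
    and f1: "clinear_functional f1" and f2: "clinear_functional f2"
    and indep: "cindependent [z1, z2]" and trace: "f2 z2 = - f1 z1"
    and mu: "\<mu> \<noteq> 0" and det: "\<mu> * \<mu> = f1 z1 * f1 z1 + f1 z2 * f2 z1"
  shows "\<mu> \<in> peripheral_spectrum Z" "- \<mu> \<in> peripheral_spectrum Z"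
proof -
  define t b e where "t = f1 z1" and "b = f1 z2" and "e = f2 z1"
  define P where "P \<alpha> \<beta> = scaleC \<alpha> z1 + scaleC \<beta> z2" for \<alpha> \<beta>
  have ZP: "Z (P \<alpha> \<beta>) = P (\<alpha> * t + \<beta> * b) (\<alpha> * e - \<beta> * t)" for \<alpha> \<beta>
    unfolding P_def t_def b_def e_def Zd
    by (simp add: clinear_functionalD[OF f1] clinear_functionalD[OF f2] trace algebra_simps)
  have ZxP: "Z x = P (f1 x) (f2 x)" for x unfolding P_def by (rule Zd)
  have sP: "scaleC c (P \<alpha> \<beta>) = P (c * \<alpha>) (c * \<beta>)" for c \<alpha> \<beta>
    unfolding P_def by (simp add: scaleC_add_right)
  have cubic: "Z (Z (Z x)) = scaleC (\<mu> * \<mu>) (Z x)" for x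
  proof -
    define p q where "p = f1 x" and "q = f2 x"
    have "Z (Z (Z x)) = P ((p * t + q * b) * t + (p * e - q * t) * b) ((p * t + q * b) * e - (p * e - q * t) * t)"
      unfolding ZxP[of x] ZP p_def q_def ..
    also have "(p * t + q * b) * t + (p * e - q * t) * b = (\<mu> * \<mu>) * p"
      using det unfolding t_def b_def e_def by (simp add: algebra_simps)
    also have "(p * t + q * b) * e - (p * e - q * t) * t = (\<mu> * \<mu>) * q"
      using det unfolding t_def b_def e_def by (simp add: algebra_simps)
    finally show ?thesis unfolding ZxP[of x] sP p_def q_def .
  qed
  have eigen: "\<exists>v. v \<noteq> 0 \<and> Z v = scaleC \<nu> v" if nu: "\<nu> \<noteq> 0" "\<nu> * \<nu> = t * t + b * e" for \<nu>
  proof -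
    obtain c1 c2 where c: "c1 \<noteq> 0 \<or> c2 \<noteq> 0" "c1 * t + c2 * b = \<nu> * c1" "c1 * e - c2 * t = \<nu> * c2"
      using traceless_2x2_eigenvector[OF nu] by blast
    have "P c1 c2 \<noteq> 0" using indep c(1) unfolding cindependent_pair_iff P_def by blast
    moreover have "Z (P c1 c2) = scaleC \<nu> (P c1 c2)" unfolding ZP sP c(2) c(3) ..
    ultimately show ?thesis by blast
  qed
  have "\<mu> * \<mu> = t * t + b * e" using det unfolding t_def b_def e_def .
  then obtain v1 v2 where v1: "v1 \<noteq> 0" "Z v1 = scaleC \<mu> v1" and v2: "v2 \<noteq> 0" "Z v2 = scaleC (- \<mu>) v2"
    using eigen[of \<mu>] eigen[of "- \<mu>"] mu by auto
  show "\<mu> \<in> peripheral_spectrum Z" "- \<mu> \<in> peripheral_spectrum Z"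
    using peripheral_spectrum_cubic[OF Z cubic v1 v2] by auto
qed


section \<open>Operators of rank at most one\<close>

definition rank_le1 :: "('a::complex_banach \<Rightarrow> 'a) \<Rightarrow> bool" where
  "rank_le1 T \<longleftrightarrow> (\<exists>u. \<forall>x. \<exists>c. T x = scaleC c u)"

definition tensor_op :: "'a::complex_banach \<Rightarrow> ('a \<Rightarrow> complex) \<Rightarrow> 'a \<Rightarrow> 'a" where
  "tensor_op u g = (\<lambda>x. scaleC (g x) u)"

lemma tensor_op_bops:
  assumes g: "g \<in> cdual"
  shows "tensor_op u g \<in> bops"
proof -
  obtain K where K: "\<And>x. cmod (g x) \<le> K * norm x" using cdual_bound[OF g] by blast
  show ?thesis unfolding tensor_op_def
  proof (rule bopsI[where K="K * norm u"])
    show "norm (scaleC (g x) u) \<le> norm x * (K * norm u)" for x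
      using mult_right_mono[OF K[of x], of "norm u"] by (simp add: norm_scaleC algebra_simps)
  qed (simp_all add: cdualD[OF g] scaleC_add_left)
qed

lemma rank_le1_tensor_op: "rank_le1 (tensor_op u g)"
  unfolding rank_le1_def tensor_op_def by blast

lemma rank_le1_decomp:
  fixes T :: "'a::complex_banach \<Rightarrow> 'a"
  assumes T: "T \<in> bops" and r: "rank_le1 T"
  shows "\<exists>w g. clinear_functional g \<and> (\<forall>x. T x = scaleC (g x) w)"
proof -
  obtain u where u: "\<And>x. \<exists>c. T x = scaleC c u" using r unfolding rank_le1_def by blast
  show ?thesis
  proof (cases "u = 0")
    case True
    then show ?thesis using u unfolding clinear_functional_def
      by (intro exI[of _ u] exI[of _ "\<lambda>x. 0"]) auto
  next
    case False
    define g where "g x = (SOME c. T x = scaleC c u)" for x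
    have g: "T x = scaleC (g x) u" for x unfolding g_def by (rule someI_ex[OF u])
    have "clinear_functional g"
      unfolding clinear_functional_def
    proof (intro allI conjI)
      show "g (x + y) = g x + g y" for x y
        using g[of "x + y"] g[of x] g[of y] bopsD(1)[OF T, of x y] False
        by (simp add: scaleC_add_left[symmetric])
      show "g (scaleC c x) = c * g x" for c x
        using g[of "scaleC c x"] g[of x] bopsD(2)[OF T, of c x] False by simp
    qed
    then show ?thesis using g by blast
  qed
qed

lemma peripheral_spectrum_rank_le1:
  fixes Z :: "'a::complex_banach \<Rightarrow> 'a"
  assumes nontrivial: "\<exists>v::'a. v \<noteq> 0" and Z: "Z \<in> bops"
    and g: "clinear_functional g" and Zd: "\<And>x. Z x = scaleC (g x) w"
  shows "peripheral_spectrum Z = {g w}"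
proof (rule peripheral_spectrum_quadratic[OF nontrivial Z])
  show "Z (Z x) = scaleC (g w) (Z x)" for x
    unfolding Zd[of x] by (simp add: bopsD(2)[OF Z] Zd[of w] mult.commute)
  show "g w = 0 \<or> (\<exists>x. Z x \<noteq> 0)"
    using Zd[of w] clinear_functionalD(3)[OF g] by (cases "w = 0") auto
qed

lemma peripheral_spectrum_sandwich_rank_le1:
  fixes T S :: "'a::complex_banach \<Rightarrow> 'a"
  assumes nontrivial: "\<exists>v::'a. v \<noteq> 0" and T: "T \<in> bops" and S: "S \<in> bops" and r: "rank_le1 T"
  shows "\<exists>\<^sub>\<le>\<^sub>1z. z \<in> peripheral_spectrum ((S ^^ r) \<circ> T \<circ> (S ^^ s))"
proof -
  obtain w g where g: "clinear_functional g" and Td: "\<And>x. T x = scaleC (g x) w"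
    using rank_le1_decomp[OF T r] by blast
  define g' where "g' x = g ((S ^^ s) x)" for x
  have "clinear_functional g'"
    using g bopsD[OF bops_funpow[OF S, of s]]
    unfolding clinear_functional_def g'_def by (simp add: clinear_functionalD)
  moreover have "((S ^^ r) \<circ> T \<circ> (S ^^ s)) x = scaleC (g' x) ((S ^^ r) w)" for x
    by (simp add: Td g'_def bopsD(2)[OF bops_funpow[OF S]])
  moreover have "(S ^^ r) \<circ> T \<circ> (S ^^ s) \<in> bops" by (intro bops_comp bops_funpow S T)
  ultimately show ?thesis
    using peripheral_spectrum_rank_le1[OF nontrivial] unfolding Uniq_def by (metis singletonD)
qed

lemma funpow_Suc_tensor:
  assumes f: "clinear_functional f" and Bd: "\<And>x. B x = scaleC (f x) x0"
  shows "(B ^^ Suc n) y = scaleC (f x0 ^ n * f y) x0"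
proof (induction n arbitrary: y)
  case 0
  then show ?case by (simp add: Bd)
next
  case (Suc n)
  then show ?case by (simp add: Bd clinear_functionalD[OF f] algebra_simps)
qed

lemma funpow_tensor_self:
  assumes f: "clinear_functional f" and Bd: "\<And>x. B x = scaleC (f x) x0"
  shows "(B ^^ n) x0 = scaleC (f x0 ^ n) x0"
  using funpow_Suc_tensor[OF f Bd] by (cases n) (simp_all add: power_Suc2)

lemma peripheral_spectrum_tensor_sandwich:
  fixes A B :: "'a::complex_banach \<Rightarrow> 'a"
  assumes nontrivial: "\<exists>v::'a. v \<noteq> 0" and A: "A \<in> bops" and B: "B \<in> bops"
    and f: "clinear_functional f" and Bd: "\<And>x. B x = scaleC (f x) x0" and rs: "r + s \<ge> 1"
  shows "peripheral_spectrum ((B ^^ r) \<circ> A \<circ> (B ^^ s)) = {f x0 ^ (r + s - 1) * f (A x0)}"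
proof -
  have Z: "(B ^^ r) \<circ> A \<circ> (B ^^ s) \<in> bops" by (intro bops_comp bops_funpow A B)
  show ?thesis
  proof (cases r)
    case 0
    then obtain k where s: "s = Suc k" using rs by (cases s) auto
    define g where "g x = f x0 ^ k * f x" for x
    have "clinear_functional g"
      using f unfolding clinear_functional_def g_def by (simp add: algebra_simps)
    moreover have "((B ^^ r) \<circ> A \<circ> (B ^^ s)) x = scaleC (g x) (A x0)" for x
      using 0 s by (simp add: funpow_Suc_tensor[OF f Bd] bopsD(2)[OF A] g_def del: funpow.simps)
    ultimately have "peripheral_spectrum ((B ^^ r) \<circ> A \<circ> (B ^^ s)) = {g (A x0)}"
      by (rule peripheral_spectrum_rank_le1[OF nontrivial Z])
    then show ?thesis by (simp add: g_def 0 s)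
  next
    case (Suc k)
    define g where "g x = f x0 ^ k * f (A ((B ^^ s) x))" for x
    have "clinear_functional g"
      using f bopsD[OF bops_funpow[OF B, of s]] bopsD[OF A]
      unfolding clinear_functional_def g_def by (simp add: algebra_simps)
    moreover have "((B ^^ r) \<circ> A \<circ> (B ^^ s)) x = scaleC (g x) x0" for x
      using Suc by (simp add: funpow_Suc_tensor[OF f Bd] g_def del: funpow.simps)
    ultimately have "peripheral_spectrum ((B ^^ r) \<circ> A \<circ> (B ^^ s)) = {g x0}"
      by (rule peripheral_spectrum_rank_le1[OF nontrivial Z])
    also have "g x0 = f x0 ^ (r + s - 1) * f (A x0)"
      unfolding g_def funpow_tensor_self[OF f Bd] using Suc
      by (simp add: bopsD(2)[OF A] clinear_functionalD[OF f] power_add algebra_simps)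
    finally show ?thesis .
  qed
qed


section \<open>Operators of rank at least two\<close>

definition two_point_sandwich :: "nat \<Rightarrow> nat \<Rightarrow> ('a::complex_banach \<Rightarrow> 'a) \<Rightarrow> bool" where
  "two_point_sandwich r s T \<longleftrightarrow>
     (\<exists>S\<in>bops. rank_le 2 S \<and> \<not> (\<exists>\<^sub>\<le>\<^sub>1z. z \<in> peripheral_spectrum ((S ^^ r) \<circ> T \<circ> (S ^^ s))))"

lemma rank_le2I:
  fixes S :: "'a::complex_banach \<Rightarrow> 'a"
  assumes "\<And>x. \<exists>\<alpha> \<beta>. S x = scaleC \<alpha> v1 + scaleC \<beta> v2"
  shows "rank_le 2 S"
proof -
  have "range S \<subseteq> cspan {v1, v2}"
  proof
    fix y assume "y \<in> range S"
    then obtain \<alpha> \<beta> where y: "y = scaleC \<alpha> v1 + scaleC \<beta> v2" using assms by blast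
    show "y \<in> cspan {v1, v2}"
    proof (cases "v1 = v2")
      case True
      then show ?thesis unfolding cspan_def using y
        by (auto simp: scaleC_add_left[symmetric] intro!: exI[of _ "\<lambda>_. \<alpha> + \<beta>"])
    next
      case False
      then have "y = (\<Sum>v\<in>{v1, v2}. scaleC (if v = v1 then \<alpha> else \<beta>) v)" using y by simp
      then show ?thesis unfolding cspan_def by (intro CollectI exI[of _ "\<lambda>v. if v = v1 then \<alpha> else \<beta>"])
    qed
  qed
  then have V: "finite {v1, v2} \<and> card {v1, v2} = card {v1, v2} \<and> range S \<subseteq> cspan {v1, v2}"
    by simp
  then have "finite_rank S" and "crank S \<le> card {v1, v2}"
    unfolding finite_rank_def crank_def by (blast, intro Least_le exI[of _ "{v1, v2}"])
  moreover have "card {v1, v2} \<le> 2" by (simp add: card_insert_le_m1)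
  ultimately show ?thesis unfolding rank_le_def by simp
qed

lemma rank_le2_tensor_op: "rank_le 2 (tensor_op u g)"
  unfolding tensor_op_def by (rule rank_le2I[of _ u u]) (auto intro: exI[of _ 0])

lemma exists_root_minus_one:
  assumes "m \<noteq> 0"
  shows "\<exists>\<omega>::complex. \<omega> ^ m = -1"
proof
  have "exp (\<i> * of_real pi / of_nat m) ^ m = exp (of_nat m * (\<i> * of_real pi / of_nat m))"
    by (rule exp_of_nat_mult[symmetric])
  also have "of_nat m * (\<i> * of_real pi / of_nat m) = \<i> * of_real pi" using assms by simp
  finally show "exp (\<i> * of_real pi / of_nat m) ^ m = -1" by simp
qed

text \<open>
  The compression of \<open>T\<close> to \<open>span {v\<^sub>1, v\<^sub>2}\<close> has equal diagonal entries and nonzero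
  determinant \<open>D\<close>. For \<open>S = v\<^sub>1 \<otimes> k\<^sub>1 + \<omega> v\<^sub>2 \<otimes> k\<^sub>2\<close> with \<open>\<omega>\<^sup>r\<^sup>+\<^sup>s = -1\<close>, the operator
  \<open>S\<^sup>r T S\<^sup>s\<close> is of rank two, traceless and of determinant \<open>-D\<close>, so \<open>\<plusminus>\<surd>D\<close> are both peripheral.
\<close>
lemma two_point_sandwichI:
  fixes T :: "'a::complex_banach \<Rightarrow> 'a"
  assumes T: "T \<in> bops" and k1: "k1 \<in> cdual" and k2: "k2 \<in> cdual"
    and biorth: "k1 v1 = 1" "k1 v2 = 0" "k2 v1 = 0" "k2 v2 = 1"
    and diagonal: "k1 (T v1) = k2 (T v2)"
    and det: "k1 (T v1) * k2 (T v2) - k1 (T v2) * k2 (T v1) \<noteq> 0"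
    and rs: "r + s \<ge> 1"
  shows "two_point_sandwich r s T"
proof -
  have "r + s \<noteq> 0" using rs by linarith
  then obtain \<omega> :: complex where om: "\<omega> ^ (r + s) = -1" using exists_root_minus_one by blast
  define a b c where "a = k1 (T v1)" and "b = k1 (T v2)" and "c = k2 (T v1)"
  define D where "D = a * a - b * c"
  have D: "D \<noteq> 0" using det diagonal unfolding D_def a_def b_def c_def by simp
  define \<mu> where "\<mu> = csqrt D"
  have mu: "\<mu> \<noteq> 0" "\<mu> * \<mu> = D"
    using D power2_csqrt[of D] unfolding \<mu>_def by (auto simp: power2_eq_square)
  define S where "S x = scaleC (k1 x) v1 + scaleC (\<omega> * k2 x) v2" for x
  have S: "S \<in> bops"
    using bops_add[OF tensor_op_bops[OF k1] tensor_op_bops[OF cdual_mult[OF k2]]]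
    unfolding S_def tensor_op_def .
  have "rank_le 2 S" by (rule rank_le2I[of S v1 v2]) (auto simp: S_def)
  have Spow: "(S ^^ Suc n) x = scaleC (k1 x) v1 + scaleC (\<omega> ^ Suc n * k2 x) v2" for n x
    by (induction n) (simp_all add: S_def cdualD[OF k1] cdualD[OF k2] biorth mult.assoc)
  have Sv1: "(S ^^ n) v1 = v1" for n
    by (cases n) (simp_all only: Spow biorth, simp_all)
  have Sv2: "(S ^^ n) v2 = scaleC (\<omega> ^ n) v2" for n
    by (cases n) (simp_all only: Spow biorth, simp_all)
  have indep: "cindependent [v1, v2]"
    unfolding cindependent_pair_iff
  proof (intro allI impI)
    fix \<alpha> \<beta> assume "scaleC \<alpha> v1 + scaleC \<beta> v2 = 0"
    then have "k1 (scaleC \<alpha> v1 + scaleC \<beta> v2) = 0" "k2 (scaleC \<alpha> v1 + scaleC \<beta> v2) = 0"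
      by (simp_all add: cdualD[OF k1] cdualD[OF k2])
    then show "\<alpha> = 0 \<and> \<beta> = 0" by (simp add: cdualD[OF k1] cdualD[OF k2] biorth)
  qed
  define Z where "Z = (S ^^ r) \<circ> T \<circ> (S ^^ s)"
  have Z: "Z \<in> bops" unfolding Z_def by (intro bops_comp bops_funpow S T)
  have "\<mu> \<in> peripheral_spectrum Z \<and> - \<mu> \<in> peripheral_spectrum Z"
  proof (cases r)
    case 0
    then obtain j where s: "s = Suc j" using rs by (cases s) auto
    have oms: "\<omega> ^ s = -1" using om 0 by simp
    define f2 where "f2 x = \<omega> ^ s * k2 x" for x
    have Zd: "Z x = scaleC (k1 x) (T v1) + scaleC (f2 x) (T v2)" for x
      unfolding Z_def f2_def using 0 s by (simp add: Spow bopsD[OF T] del: funpow.simps)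
    have indep': "cindependent [T v1, T v2]"
      unfolding cindependent_pair_iff
    proof (intro allI impI)
      fix \<alpha> \<beta> assume "scaleC \<alpha> (T v1) + scaleC \<beta> (T v2) = 0"
      then have "k1 (scaleC \<alpha> (T v1) + scaleC \<beta> (T v2)) = 0" "k2 (scaleC \<alpha> (T v1) + scaleC \<beta> (T v2)) = 0"
        by (simp_all add: cdualD[OF k1] cdualD[OF k2])
      then have e: "\<alpha> * a + \<beta> * b = 0" "\<alpha> * c + \<beta> * a = 0"
        using diagonal unfolding a_def b_def c_def by (simp_all add: cdualD[OF k1] cdualD[OF k2])
      have "\<alpha> * D = a * (\<alpha> * a + \<beta> * b) - b * (\<alpha> * c + \<beta> * a)"
        and "\<beta> * D = a * (\<alpha> * c + \<beta> * a) - c * (\<alpha> * a + \<beta> * b)"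
        unfolding D_def by (simp_all add: algebra_simps)
      then have "\<alpha> * D = 0" "\<beta> * D = 0" by (simp_all only: e mult_zero_right diff_zero)
      then show "\<alpha> = 0 \<and> \<beta> = 0" using D by simp
    qed
    have f2: "clinear_functional f2"
      unfolding f2_def by (rule cdual_clinear[OF cdual_mult[OF k2]])
    have trace: "f2 (T v2) = - k1 (T v1)" unfolding f2_def oms using diagonal by simp
    have det': "\<mu> * \<mu> = k1 (T v1) * k1 (T v1) + k1 (T v2) * f2 (T v1)"
      unfolding mu(2) f2_def oms D_def a_def b_def c_def by simp
    show ?thesis
      using peripheral_spectrum_traceless_rank_two[OF Z Zd cdual_clinear[OF k1] f2 indep' trace mu(1) det']
      by blast
  next
    case (Suc i)
    define f1 f2 where "f1 x = k1 (T ((S ^^ s) x))" and "f2 x = \<omega> ^ r * k2 (T ((S ^^ s) x))" for x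
    have Zd: "Z x = scaleC (f1 x) v1 + scaleC (f2 x) v2" for x
      unfolding Z_def f1_def f2_def using Suc by (simp only: comp_apply Spow)
    have TS: "(\<lambda>x. T ((S ^^ s) x)) \<in> bops"
      using bops_comp[OF T bops_funpow[OF S]] by (simp add: comp_def)
    have f1: "clinear_functional f1"
      unfolding f1_def by (rule cdual_clinear[OF cdual_comp_bops[OF k1 TS]])
    have f2: "clinear_functional f2"
      unfolding f2_def by (rule cdual_clinear[OF cdual_mult[OF cdual_comp_bops[OF k2 TS]]])
    have trace: "f2 v2 = - f1 v1"
    proof -
      have "f2 v2 = \<omega> ^ (r + s) * k2 (T v2)"
        unfolding f2_def Sv2 by (simp add: bopsD(2)[OF T] cdualD[OF k2] power_add)
      then show ?thesis unfolding om f1_def Sv1 using diagonal by simp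
    qed
    have det': "\<mu> * \<mu> = f1 v1 * f1 v1 + f1 v2 * f2 v1"
    proof -
      have "f1 v1 * f1 v1 + f1 v2 * f2 v1 = a * a + \<omega> ^ (r + s) * (b * c)"
        unfolding f1_def f2_def Sv1 Sv2 a_def b_def c_def
        by (simp add: bopsD(2)[OF T] cdualD[OF k1] power_add algebra_simps)
      then show ?thesis unfolding om mu(2) D_def by simp
    qed
    show ?thesis using peripheral_spectrum_traceless_rank_two[OF Z Zd f1 f2 indep trace mu(1) det'] by blast
  qed
  moreover have "\<mu> \<noteq> - \<mu>" using mu(1) by simp
  ultimately have "\<not> (\<exists>\<^sub>\<le>\<^sub>1z. z \<in> peripheral_spectrum Z)"
    unfolding Uniq_def by blast
  then show ?thesis unfolding two_point_sandwich_def Z_def using S \<open>rank_le 2 S\<close> by blast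
qed

lemma two_point_sandwich_cyclic:
  fixes T :: "'a::complex_banach \<Rightarrow> 'a"
  assumes T: "T \<in> bops" and indep: "cindependent [u, T u, T (T u)]" and rs: "r + s \<ge> 1"
  shows "two_point_sandwich r s T"
proof -
  obtain k1 where k1: "k1 \<in> cdual" "map k1 [u, T u, T (T u)] = [1, 0, 1]"
    using cdual_interpolation[OF indep, of "[1, 0, 1]"] by auto
  obtain k2 where k2: "k2 \<in> cdual" "map k2 [u, T u, T (T u)] = [0, 1, 0]"
    using cdual_interpolation[OF indep, of "[0, 1, 0]"] by auto
  show ?thesis
    by (rule two_point_sandwichI[OF T k1(1) k2(1) _ _ _ _ _ _ rs, of u "T u"]) (use k1 k2 in simp_all)
qed

lemma two_point_sandwich_quadratic:
  fixes T :: "'a::complex_banach \<Rightarrow> 'a"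
  assumes T: "T \<in> bops" and indep: "cindependent [u, T u]"
    and TT: "T (T u) = scaleC p u + scaleC q (T u)" and p: "p \<noteq> 0" and rs: "r + s \<ge> 1"
  shows "two_point_sandwich r s T"
proof -
  \<comment> \<open>In the basis \<open>u, v\<close> with \<open>v = T u - (q/2) u\<close> the compression of \<open>T\<close> has equal diagonal
    entries \<open>q/2\<close> and determinant \<open>-p\<close>.\<close>
  define t where "t = q / 2"
  define v where "v = T u - scaleC t u"
  have indep': "cindependent [u, v]"
    unfolding cindependent_pair_iff
  proof (intro allI impI)
    fix \<alpha> \<beta> assume "scaleC \<alpha> u + scaleC \<beta> v = 0"
    then have "scaleC (\<alpha> - \<beta> * t) u + scaleC \<beta> (T u) = 0"
      unfolding v_def by (simp add: algebra_simps)
    then have "\<alpha> - \<beta> * t = 0 \<and> \<beta> = 0" using indep unfolding cindependent_pair_iff by blast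
    then show "\<alpha> = 0 \<and> \<beta> = 0" by simp
  qed
  obtain k1 where k1: "k1 \<in> cdual" "k1 u = 1" "k1 v = 0"
    using cdual_interpolation[OF indep', of "[1, 0]"] by auto
  obtain k2 where k2: "k2 \<in> cdual" "k2 u = 0" "k2 v = 1"
    using cdual_interpolation[OF indep', of "[0, 1]"] by auto
  have Tu: "T u = v + scaleC t u" unfolding v_def by simp
  have "T v = scaleC (p + (q - t) * t) u + scaleC (q - t) v"
    unfolding v_def by (simp add: bopsD[OF T] TT algebra_simps)
  moreover have "q - t = t" unfolding t_def by simp
  ultimately have Tv: "T v = scaleC (p + t * t) u + scaleC t v" by simp
  show ?thesis
  proof (rule two_point_sandwichI[OF T k1(1) k2(1) _ _ _ _ _ _ rs, of u v])
    show "k1 (T u) = k2 (T v)"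
      unfolding Tu Tv by (simp add: cdualD[OF k1(1)] cdualD[OF k2(1)] k1 k2)
    have "k1 (T u) * k2 (T v) - k1 (T v) * k2 (T u) = - p"
      unfolding Tu Tv by (simp add: cdualD[OF k1(1)] cdualD[OF k2(1)] k1 k2)
    then show "k1 (T u) * k2 (T v) - k1 (T v) * k2 (T u) \<noteq> 0" using p by simp
  qed (simp_all add: k1 k2)
qed

lemma not_rank_le1_imp_independent_images:
  fixes T :: "'a::complex_banach \<Rightarrow> 'a"
  assumes "\<not> rank_le1 T"
  shows "\<exists>x1 x2. cindependent [T x1, T x2]"
proof (rule ccontr)
  assume dep: "\<nexists>x1 x2. cindependent [T x1, T x2]"
  obtain x0 where x0: "T x0 \<noteq> 0"
    using assms unfolding rank_le1_def by (metis complex_vector.scale_zero_right)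
  have "\<exists>c. T x = scaleC c (T x0)" for x
  proof -
    obtain \<alpha> \<beta> where ab: "scaleC \<alpha> (T x0) + scaleC \<beta> (T x) = 0" "\<alpha> \<noteq> 0 \<or> \<beta> \<noteq> 0"
      using dep unfolding cindependent_pair_iff by blast
    then have "\<beta> \<noteq> 0" using x0 by auto
    moreover have "scaleC \<beta> (T x) + scaleC \<alpha> (T x0) = 0" using ab(1) by (simp add: add.commute)
    ultimately have "T x = scaleC (- inverse \<beta>) (scaleC \<alpha> (T x0))" by (intro scaleC_add_eq_0_solve)
    then show ?thesis by (metis complex_vector.scale_scale)
  qed
  then show False using assms unfolding rank_le1_def by blast
qed

lemma two_point_sandwich_eigen_range:
  fixes T :: "'a::complex_banach \<Rightarrow> 'a"
  assumes T: "T \<in> bops" and nr: "\<not> rank_le1 T" and rs: "r + s \<ge> 1"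
    and eigen: "\<And>u. \<exists>c. T (T u) = scaleC c (T u)"
  shows "two_point_sandwich r s T"
proof -
  obtain x1 x2 where indep: "cindependent [T x1, T x2]"
    using not_rank_le1_imp_independent_images[OF nr] by blast
  \<comment> \<open>Every vector of the range is an eigenvector, hence \<open>T\<close> is a scalar on the range.\<close>
  obtain c1 c2 c3 where c1: "T (T x1) = scaleC c1 (T x1)" and c2: "T (T x2) = scaleC c2 (T x2)"
    and c3: "T (T (x1 + x2)) = scaleC c3 (T (x1 + x2))"
    using eigen by metis
  have "scaleC (c1 - c3) (T x1) + scaleC (c2 - c3) (T x2) = 0"
    using c3 by (simp add: bopsD[OF T] c1 c2 algebra_simps)
  then have "c1 - c3 = 0 \<and> c2 - c3 = 0" using indep unfolding cindependent_pair_iff by blast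
  then have c: "c2 = c1" by simp
  show ?thesis
  proof (cases "c1 = 0")
    case False
    obtain k1 where k1: "k1 \<in> cdual" "k1 (T x1) = 1" "k1 (T x2) = 0"
      using cdual_interpolation[OF indep, of "[1, 0]"] by auto
    obtain k2 where k2: "k2 \<in> cdual" "k2 (T x1) = 0" "k2 (T x2) = 1"
      using cdual_interpolation[OF indep, of "[0, 1]"] by auto
    show ?thesis
      by (rule two_point_sandwichI[OF T k1(1) k2(1) _ _ _ _ _ _ rs, of "T x1" "T x2"])
        (use False in \<open>simp_all add: c1 c2 c cdualD[OF k1(1)] cdualD[OF k2(1)] k1 k2\<close>)
  next
    \<comment> \<open>Now \<open>T\<close> kills \<open>T x\<^sub>1, T x\<^sub>2\<close>, and its compression to \<open>x\<^sub>1 + T x\<^sub>2, x\<^sub>2 + T x\<^sub>1\<close> is the swap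
      matrix.\<close>
    case True
    have z1: "T (T x1) = 0" and z2: "T (T x2) = 0" using c1 c2 c True by simp_all
    have "cindependent [x1, x2, T x1, T x2]"
      unfolding cindependent_quadruple_iff
    proof (intro allI impI)
      fix \<alpha> \<beta> \<gamma> \<delta> assume e: "scaleC \<alpha> x1 + scaleC \<beta> x2 + scaleC \<gamma> (T x1) + scaleC \<delta> (T x2) = 0"
      then have "T (scaleC \<alpha> x1 + scaleC \<beta> x2 + scaleC \<gamma> (T x1) + scaleC \<delta> (T x2)) = 0"
        by (simp add: bopsD[OF T])
      then have "scaleC \<alpha> (T x1) + scaleC \<beta> (T x2) = 0" by (simp add: bopsD[OF T] z1 z2)
      then have ab: "\<alpha> = 0 \<and> \<beta> = 0" using indep unfolding cindependent_pair_iff by blast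
      then have "scaleC \<gamma> (T x1) + scaleC \<delta> (T x2) = 0" using e by simp
      then show "\<alpha> = 0 \<and> \<beta> = 0 \<and> \<gamma> = 0 \<and> \<delta> = 0" using indep ab unfolding cindependent_pair_iff by blast
    qed
    note interpolate = cdual_interpolation[OF this]
    obtain k1 where k1: "k1 \<in> cdual" "k1 x1 = 0" "k1 x2 = 0" "k1 (T x1) = 0" "k1 (T x2) = 1"
      using interpolate[of "[0, 0, 0, 1]"] by auto
    obtain k2 where k2: "k2 \<in> cdual" "k2 x1 = 0" "k2 x2 = 0" "k2 (T x1) = 1" "k2 (T x2) = 0"
      using interpolate[of "[0, 0, 1, 0]"] by auto
    have "T (x1 + T x2) = T x1" "T (x2 + T x1) = T x2" by (simp_all add: bopsD[OF T] z1 z2)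
    then show ?thesis
      by (intro two_point_sandwichI[OF T k1(1) k2(1) _ _ _ _ _ _ rs, of "x1 + T x2" "x2 + T x1"])
        (simp_all add: cdualD[OF k1(1)] cdualD[OF k2(1)] k1 k2)
  qed
qed

lemma eigen_range_if_not_cyclic:
  fixes T :: "'a::complex_banach \<Rightarrow> 'a"
  assumes T: "T \<in> bops"
    and not_cyclic: "\<And>u. \<not> cindependent [u, T u, T (T u)]"
    and not_quadratic: "\<And>u p q. cindependent [u, T u] \<Longrightarrow> T (T u) = scaleC p u + scaleC q (T u) \<Longrightarrow> p = 0"
  shows "\<exists>c. T (T u) = scaleC c (T u)"
proof (cases "cindependent [u, T u]")
  case True
  obtain \<alpha> \<beta> \<gamma> where e: "scaleC \<alpha> u + scaleC \<beta> (T u) + scaleC \<gamma> (T (T u)) = 0"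
    and nz: "\<alpha> \<noteq> 0 \<or> \<beta> \<noteq> 0 \<or> \<gamma> \<noteq> 0"
    using not_cyclic[of u] unfolding cindependent_triple_iff by blast
  have "\<gamma> \<noteq> 0"
    using True e nz unfolding cindependent_pair_iff by auto
  moreover have "scaleC \<gamma> (T (T u)) + (scaleC \<alpha> u + scaleC \<beta> (T u)) = 0"
    using e by (simp add: ac_simps)
  ultimately have "T (T u) = scaleC (- inverse \<gamma>) (scaleC \<alpha> u + scaleC \<beta> (T u))"
    by (intro scaleC_add_eq_0_solve)
  then have TT: "T (T u) = scaleC (- inverse \<gamma> * \<alpha>) u + scaleC (- inverse \<gamma> * \<beta>) (T u)"
    by (simp add: scaleC_add_right)
  then have "- inverse \<gamma> * \<alpha> = 0" by (rule not_quadratic[OF True])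
  with TT show ?thesis by (metis add_0 complex_vector.scale_zero_left)
next
  case False
  then obtain \<alpha> \<beta> where e: "scaleC \<alpha> u + scaleC \<beta> (T u) = 0" and nz: "\<alpha> \<noteq> 0 \<or> \<beta> \<noteq> 0"
    unfolding cindependent_pair_iff by blast
  show ?thesis
  proof (cases "\<beta> = 0")
    case True
    then have "u = 0" using e nz by simp
    then show ?thesis by (auto simp: bopsD[OF T])
  next
    case False
    moreover have "scaleC \<beta> (T u) + scaleC \<alpha> u = 0" using e by (simp add: add.commute)
    ultimately have "T u = scaleC (- inverse \<beta>) (scaleC \<alpha> u)" by (intro scaleC_add_eq_0_solve)
    then have "T (T u) = scaleC (- inverse \<beta> * \<alpha>) (T u)"
      by (metis bopsD(2)[OF T] complex_vector.scale_scale)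
    then show ?thesis by blast
  qed
qed

lemma not_rank_le1_imp_two_point_sandwich:
  fixes T :: "'a::complex_banach \<Rightarrow> 'a"
  assumes T: "T \<in> bops" and nr: "\<not> rank_le1 T" and rs: "r + s \<ge> 1"
  shows "two_point_sandwich r s T"
proof (cases "\<exists>u. cindependent [u, T u, T (T u)]")
  case True
  then show ?thesis using two_point_sandwich_cyclic[OF T _ rs] by blast
next
  case not_cyclic: False
  show ?thesis
  proof (cases "\<exists>u p q. cindependent [u, T u] \<and> T (T u) = scaleC p u + scaleC q (T u) \<and> p \<noteq> 0")
    case True
    then show ?thesis using two_point_sandwich_quadratic[OF T _ _ _ rs] by blast
  next
    case False
    then have "\<exists>c. T (T u) = scaleC c (T u)" for u
      using eigen_range_if_not_cyclic[OF T] not_cyclic by blast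
    then show ?thesis by (rule two_point_sandwich_eigen_range[OF T nr rs])
  qed
qed

lemma rank_le1_iff_peripheral_sandwiches:
  fixes T :: "'a::complex_banach \<Rightarrow> 'a"
  assumes nontrivial: "\<exists>v::'a. v \<noteq> 0" and T: "T \<in> bops" and rs: "r + s \<ge> 1"
    and ops: "\<S> \<subseteq> bops" and rank_le2: "{S \<in> bops. rank_le 2 S} \<subseteq> \<S>"
  shows "rank_le1 T \<longleftrightarrow> (\<forall>S\<in>\<S>. \<exists>\<^sub>\<le>\<^sub>1z. z \<in> peripheral_spectrum ((S ^^ r) \<circ> T \<circ> (S ^^ s)))"
proof
  assume "rank_le1 T"
  show "\<forall>S\<in>\<S>. \<exists>\<^sub>\<le>\<^sub>1z. z \<in> peripheral_spectrum ((S ^^ r) \<circ> T \<circ> (S ^^ s))"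
  proof
    fix S assume "S \<in> \<S>"
    with ops have "S \<in> bops" by blast
    then show "\<exists>\<^sub>\<le>\<^sub>1z. z \<in> peripheral_spectrum ((S ^^ r) \<circ> T \<circ> (S ^^ s))"
      using peripheral_spectrum_sandwich_rank_le1[OF nontrivial T] \<open>rank_le1 T\<close> by blast
  qed
next
  assume uniq: "\<forall>S\<in>\<S>. \<exists>\<^sub>\<le>\<^sub>1z. z \<in> peripheral_spectrum ((S ^^ r) \<circ> T \<circ> (S ^^ s))"
  show "rank_le1 T"
  proof (rule ccontr)
    assume "\<not> rank_le1 T"
    then obtain S where "S \<in> bops" "rank_le 2 S"
      and "\<not> (\<exists>\<^sub>\<le>\<^sub>1z. z \<in> peripheral_spectrum ((S ^^ r) \<circ> T \<circ> (S ^^ s)))"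
      using not_rank_le1_imp_two_point_sandwich[OF T _ rs] unfolding two_point_sandwich_def by blast
    then show False using uniq rank_le2 by blast
  qed
qed

lemma rank_one_iff_rank_le1: "rank_one T \<longleftrightarrow> rank_le1 T \<and> T \<noteq> (\<lambda>x. 0)"
proof -
  define P where "P n \<longleftrightarrow> (\<exists>V. finite V \<and> card V = n \<and> range T \<subseteq> cspan V)" for n
  have crank: "crank T = (LEAST n. P n)" unfolding crank_def P_def ..
  have cspan_singleton: "cspan {u} = range (\<lambda>c. scaleC c u)" for u :: 'a
    unfolding cspan_def by auto
  have P0: "P 0 \<longleftrightarrow> T = (\<lambda>x. 0)"
    unfolding P_def cspan_def by (auto simp: fun_eq_iff image_subset_iff)
  have "P 1 \<longleftrightarrow> (\<exists>u. range T \<subseteq> cspan {u})"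
    unfolding P_def
  proof
    assume "\<exists>V. finite V \<and> card V = 1 \<and> range T \<subseteq> cspan V"
    then obtain V where "card V = 1" "range T \<subseteq> cspan V" by blast
    then show "\<exists>u. range T \<subseteq> cspan {u}" by (auto simp: card_1_singleton_iff)
  next
    assume "\<exists>u. range T \<subseteq> cspan {u}"
    then obtain u where "range T \<subseteq> cspan {u}" by blast
    then show "\<exists>V. finite V \<and> card V = 1 \<and> range T \<subseteq> cspan V" by (intro exI[of _ "{u}"]) simp
  qed
  also have "\<dots> \<longleftrightarrow> rank_le1 T"
    unfolding rank_le1_def cspan_singleton image_subset_iff by blast
  finally have P1: "P 1 \<longleftrightarrow> rank_le1 T" .
  show ?thesis
  proof
    assume "rank_one T"
    then have "finite_rank T" and crank1: "crank T = 1" unfolding rank_one_def by auto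
    then obtain V where "finite V" "range T \<subseteq> cspan V" unfolding finite_rank_def by blast
    then have "P (card V)" unfolding P_def by blast
    then have "P (LEAST n. P n)" by (rule LeastI)
    then have "P 1" using crank1 crank by simp
    moreover have "\<not> P 0"
    proof
      assume "P 0"
      then have "(LEAST n. P n) \<le> 0" by (rule Least_le)
      then show False using crank1 crank by simp
    qed
    ultimately show "rank_le1 T \<and> T \<noteq> (\<lambda>x. 0)" using P0 P1 by blast
  next
    assume "rank_le1 T \<and> T \<noteq> (\<lambda>x. 0)"
    then have "P 1" and "\<not> P 0" using P0 P1 by blast+
    have "crank T = 1" unfolding crank
    proof (rule Least_equality)
      show "P 1" by fact
      show "1 \<le> m" if "P m" for m using that \<open>\<not> P 0\<close> by (cases m) auto
    qed
    moreover have "finite_rank T" using \<open>P 1\<close> unfolding P_def finite_rank_def by blast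
    ultimately show "rank_one T" unfolding rank_one_def by blast
  qed
qed


lemma standard_operator_algebraD:
  assumes "standard_operator_algebra \<A>"
  shows "\<A> \<subseteq> bops" and "T \<in> bops \<Longrightarrow> finite_rank T \<Longrightarrow> T \<in> \<A>"
    and "A \<in> \<A> \<Longrightarrow> A' \<in> \<A> \<Longrightarrow> (\<lambda>x. A x + A' x) \<in> \<A>"
    and "A \<in> \<A> \<Longrightarrow> (\<lambda>x. scaleC c (A x)) \<in> \<A>"
  using assms unfolding standard_operator_algebra_def by blast+

lemma standard_operator_algebra_lincomb:
  assumes "standard_operator_algebra \<A>" and "A \<in> \<A>" "A' \<in> \<A>"
  shows "(\<lambda>x. scaleC a (A x) + scaleC b (A' x)) \<in> \<A>"
  using standard_operator_algebraD(3)[OF assms(1) standard_operator_algebraD(4)[OF assms(1,2)]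
      standard_operator_algebraD(4)[OF assms(1,3)]] .

lemma standard_operator_algebra_rank_le:
  "standard_operator_algebra \<A> \<Longrightarrow> T \<in> bops \<Longrightarrow> rank_le n T \<Longrightarrow> T \<in> \<A>"
  using standard_operator_algebraD(2) unfolding rank_le_def by blast

lemma rank_le2_zero: "rank_le 2 (\<lambda>x::'a::complex_banach. 0)"
  by (rule rank_le2I[of _ 0 0]) auto

lemma fun_eq_if_trivial:
  fixes T T' :: "'c \<Rightarrow> 'a::zero"
  assumes "\<nexists>v::'a. v \<noteq> 0"
  shows "T = T'"
proof
  fix x
  have "T x = 0" "T' x = 0" using assms by blast+
  then show "T x = T' x" by simp
qed

lemma peripheral_spectrum_trivial:
  assumes "\<nexists>v::'a::complex_banach. v \<noteq> 0"
  shows "peripheral_spectrum (T :: 'a \<Rightarrow> 'a) = {}"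
proof -
  have trivial: "v = 0" for v :: 'a using assms by blast
  have "T x - scaleC z x = x" for x z using trivial[of "T x - scaleC z x"] trivial[of x] by simp
  then have "z \<notin> spectrum_op T" for z by (intro notin_spectrum_opI[OF bops_ident])
  then show ?thesis unfolding peripheral_spectrum_def by blast
qed

lemma peripheral_spectrum_zero:
  assumes "\<exists>v::'a::complex_banach. v \<noteq> 0"
  shows "peripheral_spectrum (\<lambda>x::'a. 0) = {0}"
  using peripheral_spectrum_rank_le1[OF assms bops_zero, of "\<lambda>x. 0" 0]
  unfolding clinear_functional_def by simp


section \<open>Maps preserving peripheral spectra of products\<close>

locale peripheral_spectrum_preserver =
  fixes \<A>1 :: "('a::complex_banach \<Rightarrow> 'a) set" and \<A>2 :: "('b::complex_banach \<Rightarrow> 'b) set"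
    and \<Phi> :: "('a \<Rightarrow> 'a) \<Rightarrow> ('b \<Rightarrow> 'b)" and r s :: nat
  assumes standard1: "standard_operator_algebra \<A>1"
    and standard2: "standard_operator_algebra \<A>2"
    and exponents: "r + s \<ge> 1"
    and maps_into: "\<Phi> ` \<A>1 \<subseteq> \<A>2"
    and rank_le2_in_range: "{T \<in> bops. rank_le 2 T} \<subseteq> \<Phi> ` \<A>1"
    and preserves: "\<forall>A\<in>\<A>1. \<forall>B\<in>\<A>1.
           peripheral_spectrum ((B ^^ r) \<circ> A \<circ> (B ^^ s)) =
           peripheral_spectrum ((\<Phi> B ^^ r) \<circ> \<Phi> A \<circ> (\<Phi> B ^^ s))"
begin

lemma domain_bops: "A \<in> \<A>1 \<Longrightarrow> A \<in> bops"
  using standard_operator_algebraD(1)[OF standard1] by blast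

lemma image_bops: "A \<in> \<A>1 \<Longrightarrow> \<Phi> A \<in> bops"
  using standard_operator_algebraD(1)[OF standard2] maps_into by blast

lemma peripheral_spectrum_sandwich_eq:
  "A \<in> \<A>1 \<Longrightarrow> B \<in> \<A>1 \<Longrightarrow>
    peripheral_spectrum ((B ^^ r) \<circ> A \<circ> (B ^^ s)) = peripheral_spectrum ((\<Phi> B ^^ r) \<circ> \<Phi> A \<circ> (\<Phi> B ^^ s))"
  using preserves by blast

lemma rank_le2_preimage: "T \<in> bops \<Longrightarrow> rank_le 2 T \<Longrightarrow> \<exists>B\<in>\<A>1. \<Phi> B = T"
  using rank_le2_in_range by force

lemma nontrivial_iff: "(\<exists>v::'a. v \<noteq> 0) \<longleftrightarrow> (\<exists>w::'b. w \<noteq> 0)"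
proof
  assume nontrivial_domain: "\<exists>v::'a. v \<noteq> 0"
  define Z :: "'a \<Rightarrow> 'a" where "Z = (\<lambda>x. 0)"
  have Z: "Z \<in> \<A>1"
    unfolding Z_def by (rule standard_operator_algebra_rank_le[OF standard1 bops_zero rank_le2_zero])
  show "\<exists>w::'b. w \<noteq> 0"
  proof (rule ccontr)
    assume "\<nexists>w::'b. w \<noteq> 0"
    then have "peripheral_spectrum ((\<Phi> Z ^^ r) \<circ> \<Phi> Z \<circ> (\<Phi> Z ^^ s)) = {}"
      by (rule peripheral_spectrum_trivial)
    moreover have "peripheral_spectrum ((Z ^^ r) \<circ> Z \<circ> (Z ^^ s)) = {0}"
      unfolding Z_def sandwich_zero[OF bops_zero] by (rule peripheral_spectrum_zero[OF nontrivial_domain])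
    ultimately show False using peripheral_spectrum_sandwich_eq[OF Z Z] by simp
  qed
next
  assume nontrivial_target: "\<exists>w::'b. w \<noteq> 0"
  obtain B where B: "B \<in> \<A>1" "\<Phi> B = (\<lambda>x. 0)"
    using rank_le2_preimage[OF bops_zero rank_le2_zero] by blast
  show "\<exists>v::'a. v \<noteq> 0"
  proof (rule ccontr)
    assume "\<nexists>v::'a. v \<noteq> 0"
    then have "peripheral_spectrum ((B ^^ r) \<circ> B \<circ> (B ^^ s)) = {}"
      by (rule peripheral_spectrum_trivial)
    moreover have "peripheral_spectrum ((\<Phi> B ^^ r) \<circ> \<Phi> B \<circ> (\<Phi> B ^^ s)) = {0}"
      unfolding B(2) sandwich_zero[OF bops_zero] by (rule peripheral_spectrum_zero[OF nontrivial_target])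
    ultimately show False using peripheral_spectrum_sandwich_eq[OF B(1) B(1)] by simp
  qed
qed

end

locale nontrivial_peripheral_spectrum_preserver = peripheral_spectrum_preserver \<A>1 \<A>2 \<Phi> r s
  for \<A>1 :: "('a::complex_banach \<Rightarrow> 'a) set" and \<A>2 :: "('b::complex_banach \<Rightarrow> 'b) set"
    and \<Phi> r s +
  assumes nontrivial: "\<exists>v::'a. v \<noteq> 0"
begin

lemma nontrivial_target: "\<exists>w::'b. w \<noteq> 0"
  using nontrivial nontrivial_iff by blast

lemma rank_le1_iff:
  assumes A: "A \<in> \<A>1"
  shows "rank_le1 (\<Phi> A) \<longleftrightarrow> rank_le1 A"
proof -
  have "rank_le1 A \<longleftrightarrow> (\<forall>B\<in>\<A>1. \<exists>\<^sub>\<le>\<^sub>1z. z \<in> peripheral_spectrum ((B ^^ r) \<circ> A \<circ> (B ^^ s)))"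
    by (rule rank_le1_iff_peripheral_sandwiches[OF nontrivial domain_bops[OF A] exponents
          standard_operator_algebraD(1)[OF standard1]])
      (use standard_operator_algebra_rank_le[OF standard1] in blast)
  also have "\<dots> \<longleftrightarrow> (\<forall>S\<in>\<Phi> ` \<A>1. \<exists>\<^sub>\<le>\<^sub>1z. z \<in> peripheral_spectrum ((S ^^ r) \<circ> \<Phi> A \<circ> (S ^^ s)))"
    using peripheral_spectrum_sandwich_eq[OF A] by simp
  also have "\<dots> \<longleftrightarrow> rank_le1 (\<Phi> A)"
    by (rule rank_le1_iff_peripheral_sandwiches[OF nontrivial_target image_bops[OF A] exponents, symmetric])
      (use image_bops rank_le2_in_range in auto)
  finally show ?thesis ..
qed

text \<open>
  If \<open>\<Phi> B = y \<otimes> g\<close>, then \<open>B = x\<^sub>0 \<otimes> f\<close> has rank one as well, and comparing the one-point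
  peripheral spectra of \<open>B\<^sup>r A B\<^sup>s\<close> and \<open>\<Phi>(B)\<^sup>r \<Phi>(A) \<Phi>(B)\<^sup>s\<close> gives the following identity.
\<close>
lemma transfer_functional:
  fixes y :: 'b
  assumes g: "g \<in> cdual"
  shows "\<exists>f x0. clinear_functional f \<and>
    (\<forall>A\<in>\<A>1. g y ^ (r + s - 1) * g (\<Phi> A y) = f x0 ^ (r + s - 1) * f (A x0))"
proof -
  obtain B where B: "B \<in> \<A>1" "\<Phi> B = tensor_op y g"
    using rank_le2_preimage[OF tensor_op_bops[OF g] rank_le2_tensor_op] by blast
  have PhiB: "\<Phi> B x = scaleC (g x) y" for x using B(2) unfolding tensor_op_def by simp
  have "rank_le1 B" using rank_le1_iff[OF B(1)] B(2) rank_le1_tensor_op[of y g] by simp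
  then obtain x0 f where f: "clinear_functional f" and Bd: "\<And>x. B x = scaleC (f x) x0"
    using rank_le1_decomp[OF domain_bops[OF B(1)]] by blast
  have "g y ^ (r + s - 1) * g (\<Phi> A y) = f x0 ^ (r + s - 1) * f (A x0)" if A: "A \<in> \<A>1" for A
    using peripheral_spectrum_sandwich_eq[OF A B(1)]
      peripheral_spectrum_tensor_sandwich[OF nontrivial domain_bops[OF A] domain_bops[OF B(1)] f Bd exponents]
      peripheral_spectrum_tensor_sandwich[OF nontrivial_target image_bops[OF A] image_bops[OF B(1)]
        cdual_clinear[OF g] PhiB exponents]
    by simp
  with f show ?thesis by blast
qed

lemma lincomb:
  assumes A: "A \<in> \<A>1" and A': "A' \<in> \<A>1"
  shows "\<Phi> (\<lambda>x. scaleC a (A x) + scaleC b (A' x)) = (\<lambda>x. scaleC a (\<Phi> A x) + scaleC b (\<Phi> A' x))"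
proof (rule bops_eq_cdual_separation)
  have L: "(\<lambda>x. scaleC a (A x) + scaleC b (A' x)) \<in> \<A>1"
    by (rule standard_operator_algebra_lincomb[OF standard1 A A'])
  then show "\<Phi> (\<lambda>x. scaleC a (A x) + scaleC b (A' x)) \<in> bops" by (rule image_bops)
  show "(\<lambda>x. scaleC a (\<Phi> A x) + scaleC b (\<Phi> A' x)) \<in> bops"
    by (intro bops_add bops_scaleC image_bops A A')
  fix y :: 'b and g assume g: "g \<in> cdual" and gy: "g y \<noteq> 0"
  obtain f x0 where f: "clinear_functional f"
    and transfer: "\<And>A. A \<in> \<A>1 \<Longrightarrow> g y ^ (r + s - 1) * g (\<Phi> A y) = f x0 ^ (r + s - 1) * f (A x0)"
    using transfer_functional[OF g] by blast
  have "g y ^ (r + s - 1) * g (\<Phi> (\<lambda>x. scaleC a (A x) + scaleC b (A' x)) y)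
      = a * (f x0 ^ (r + s - 1) * f (A x0)) + b * (f x0 ^ (r + s - 1) * f (A' x0))"
    using transfer[OF L] by (simp add: clinear_functionalD[OF f] algebra_simps)
  also have "\<dots> = g y ^ (r + s - 1) * g (scaleC a (\<Phi> A y) + scaleC b (\<Phi> A' y))"
    using transfer[OF A] transfer[OF A'] by (simp add: cdualD[OF g] algebra_simps)
  finally show "g (\<Phi> (\<lambda>x. scaleC a (A x) + scaleC b (A' x)) y) = g (scaleC a (\<Phi> A y) + scaleC b (\<Phi> A' y))"
    using gy by simp
qed

lemma additive: "A \<in> \<A>1 \<Longrightarrow> A' \<in> \<A>1 \<Longrightarrow> \<Phi> (\<lambda>x. A x + A' x) = (\<lambda>x. \<Phi> A x + \<Phi> A' x)"
  using lincomb[of A A' 1 1] by simp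

lemma homogeneous: "A \<in> \<A>1 \<Longrightarrow> \<Phi> (\<lambda>x. scaleC c (A x)) = (\<lambda>x. scaleC c (\<Phi> A x))"
  using lincomb[of A A c 0] by simp

lemma eq_zero_iff:
  assumes A: "A \<in> \<A>1"
  shows "\<Phi> A = (\<lambda>x. 0) \<longleftrightarrow> A = (\<lambda>x. 0)"
proof
  assume PhiA: "\<Phi> A = (\<lambda>x. 0)"
  show "A = (\<lambda>x. 0)"
  proof (rule bops_eq_cdual_separation[OF domain_bops[OF A] bops_zero])
    fix x :: 'a and f assume f: "f \<in> cdual" and fx: "f x \<noteq> 0"
    have B: "tensor_op x f \<in> \<A>1"
      by (rule standard_operator_algebra_rank_le[OF standard1 tensor_op_bops[OF f] rank_le2_tensor_op])
    have "peripheral_spectrum ((tensor_op x f ^^ r) \<circ> A \<circ> (tensor_op x f ^^ s))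
        = {f x ^ (r + s - 1) * f (A x)}"
      by (rule peripheral_spectrum_tensor_sandwich[OF nontrivial domain_bops[OF A] domain_bops[OF B]
            cdual_clinear[OF f] _ exponents]) (simp add: tensor_op_def)
    moreover have "peripheral_spectrum ((\<Phi> (tensor_op x f) ^^ r) \<circ> \<Phi> A \<circ> (\<Phi> (tensor_op x f) ^^ s)) = {0}"
      unfolding PhiA sandwich_zero[OF image_bops[OF B]] by (rule peripheral_spectrum_zero[OF nontrivial_target])
    ultimately have "f x ^ (r + s - 1) * f (A x) = 0"
      using peripheral_spectrum_sandwich_eq[OF A B] by simp
    then show "f (A x) = f 0" using fx by (simp add: cdualD[OF f])
  qed
next
  assume "A = (\<lambda>x. 0)"
  then show "\<Phi> A = (\<lambda>x. 0)" using homogeneous[OF A, of 0] by simp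
qed

lemma inj: "inj_on \<Phi> \<A>1"
proof (rule inj_onI)
  fix A A' assume A: "A \<in> \<A>1" and A': "A' \<in> \<A>1" and eq: "\<Phi> A = \<Phi> A'"
  have "\<Phi> (\<lambda>x. scaleC 1 (A x) + scaleC (-1) (A' x)) = (\<lambda>x. 0)"
    using lincomb[OF A A', of 1 "-1"] eq by simp
  then have "(\<lambda>x. scaleC 1 (A x) + scaleC (-1) (A' x)) = (\<lambda>x. 0)"
    using eq_zero_iff standard_operator_algebra_lincomb[OF standard1 A A'] by blast
  then show "A = A'" by (simp add: fun_eq_iff)
qed

lemma rank_one_iff: "A \<in> \<A>1 \<Longrightarrow> rank_one (\<Phi> A) \<longleftrightarrow> rank_one A"
  using rank_le1_iff eq_zero_iff by (simp add: rank_one_iff_rank_le1)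

end

theorem mainTheorem4:
  fixes \<A>1 :: "('a::complex_banach \<Rightarrow> 'a) set"
    and \<A>2 :: "('b::complex_banach \<Rightarrow> 'b) set"
    and \<Phi> :: "('a \<Rightarrow> 'a) \<Rightarrow> ('b \<Rightarrow> 'b)"
    and r s :: nat
  assumes "standard_operator_algebra \<A>1"
    and "standard_operator_algebra \<A>2"
    and "r + s \<ge> 1"
    and "\<Phi> ` \<A>1 \<subseteq> \<A>2"
    and "{T \<in> bops. rank_le 2 T} \<subseteq> \<Phi> ` \<A>1"
    and "\<forall>A\<in>\<A>1. \<forall>B\<in>\<A>1.
           peripheral_spectrum ((B ^^ r) \<circ> A \<circ> (B ^^ s)) =
           peripheral_spectrum ((\<Phi> B ^^ r) \<circ> \<Phi> A \<circ> (\<Phi> B ^^ s))"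
  shows "(\<forall>A\<in>\<A>1. \<Phi> A = (\<lambda>x. 0) \<longleftrightarrow> A = (\<lambda>x. 0))
       \<and> (\<forall>A\<in>\<A>1. \<forall>B\<in>\<A>1. \<Phi> (\<lambda>x. A x + B x) = (\<lambda>x. \<Phi> A x + \<Phi> B x))
       \<and> (\<forall>A\<in>\<A>1. \<forall>c. \<Phi> (\<lambda>x. scaleC c (A x)) = (\<lambda>x. scaleC c (\<Phi> A x)))
       \<and> inj_on \<Phi> \<A>1
       \<and> (\<forall>A\<in>\<A>1. rank_one A \<longleftrightarrow> rank_one (\<Phi> A))"
proof -
  interpret peripheral_spectrum_preserver \<A>1 \<A>2 \<Phi> r s
    using assms by unfold_locales
  show ?thesis
  proof (cases "\<exists>v::'a. v \<noteq> 0")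
    case True
    then interpret nontrivial_peripheral_spectrum_preserver \<A>1 \<A>2 \<Phi> r s
      by unfold_locales
    show ?thesis using eq_zero_iff additive homogeneous inj rank_one_iff by blast
  next
    case False
    then have "\<nexists>w::'b. w \<noteq> 0" using nontrivial_iff by blast
    note eq1 = fun_eq_if_trivial[OF False] and eq2 = fun_eq_if_trivial[OF this]
    have no_rank_one: "\<not> rank_one T" "\<not> rank_one U" for T :: "'a \<Rightarrow> 'a" and U :: "'b \<Rightarrow> 'b"
      using eq1[of T "\<lambda>x. 0"] eq2[of U "\<lambda>x. 0"] by (simp_all add: rank_one_iff_rank_le1)
    show ?thesis
    proof (intro conjI ballI allI)
      show "\<Phi> A = (\<lambda>x. 0) \<longleftrightarrow> A = (\<lambda>x. 0)" for A
        using eq1[of A "\<lambda>x. 0"] eq2[of "\<Phi> A" "\<lambda>x. 0"] by simp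
      show "inj_on \<Phi> \<A>1" by (rule inj_onI) (rule eq1)
      show "rank_one A \<longleftrightarrow> rank_one (\<Phi> A)" for A using no_rank_one by simp
    qed (rule eq2)+
  qed
qed

end
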